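(* Let $\{X_t\}_{t\ge 0}$ be an irreducible, positive recurrent discrete-time Markov chain on a countable state space $\mathbb{E}$ with transition matrix $P$ and invariant distribution $\boldsymbol{\pi}$, and let $\boldsymbol{g}$ be a real vector on $\mathbb{E}$ with $\boldsymbol{\pi}|\boldsymbol{g}|<\infty$. Put $\omega=\boldsymbol{\pi}\boldsymbol{g}$. Fix an arbitrary state $j\in\mathbb{E}$, let $T(j)=\inf\{t\ge 1: X_t=j\}$, and define for $i\in\mathbb{E}$ $$h_i={\rm E}\Big[\sum_{0\le t<T(j)} g_{X_t}\,\Big|\,X_0=i\Big]-\omega\,{\rm E}[T(j)\mid X_0=i].$$ Let $A$ be an arbitrary non-empty subset of $\mathbb{E}$, let $T(A)=\inf\{t\ge 1: X_t\in A\}$, and for $i\in\mathbb{E}$ define $$y_i(A)={\rm E}\Big[\sum_{0\le t<T(A)} g_{X_t}\,\Big|\,X_0=i\Big],\qquad \tau_i(A)={\rm E}[T(A)\mid X_0=i].$$ Then for every $i\in\mathbb{E}$, $$h_i=y_i(A)-\omega\,\tau_i(A)+{\rm E}\big[h_{X_{T(A)}}\,\big|\,X_0=i\big].$$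
   Context: The vector $\boldsymbol{h}$ defined in the claim (together with $\omega=\boldsymbol{\pi}\boldsymbol{g}$) is a solution of Poisson's equation $(I-P)\boldsymbol{h}=\boldsymbol{g}-\omega\boldsymbol{1}$ with $h_j=0$, where $\boldsymbol{1}$ is the all-ones column vector; $|\boldsymbol{g}|$ denotes the componentwise absolute value. *)

theory Defs
  imports "HOL-Probability.Probability"
begin

text \<open>A discrete-time Markov chain on a countable state space 's with transition
matrix P, described through its family of laws started at each state:
M i is the underlying probability space conditioned on X_0 = i, and X t is the
state at time t. The law of the chain given X_0 = i is fixed by its
finite-dimensional distributions.\<close>

definition stochastic_matrix :: "('s \<Rightarrow> 's \<Rightarrow> real) \<Rightarrow> bool" where
  "stochastic_matrix P \<longleftrightarrow>
     (\<forall>i k. 0 \<le> P i k) \<and> (\<forall>i. P i summable_on UNIV \<and> (\<Sum>\<^sub>\<infinity>k. P i k) = 1)"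

definition markov_chain ::
  "('s::countable \<Rightarrow> 's \<Rightarrow> real) \<Rightarrow> ('s \<Rightarrow> 'w measure) \<Rightarrow> (nat \<Rightarrow> 'w \<Rightarrow> 's) \<Rightarrow> bool" where
  "markov_chain P M X \<longleftrightarrow> stochastic_matrix P \<and>
     (\<forall>i. prob_space (M i) \<and>
          (\<forall>t. X t \<in> measurable (M i) (count_space UNIV)) \<and>
          (\<forall>n (s :: nat \<Rightarrow> 's).
             measure (M i) {w \<in> space (M i). \<forall>k\<le>n. X k w = s k}
               = (if s 0 = i then (\<Prod>k<n. P (s k) (s (Suc k))) else 0)))"

text \<open>First hitting time T(A) = inf {t >= 1. X_t in A} (only relevant where it is
finite, which is almost surely the case for the chains considered).\<close>

definition hit_time :: "(nat \<Rightarrow> 'w \<Rightarrow> 's) \<Rightarrow> 's set \<Rightarrow> 'w \<Rightarrow> nat" where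
  "hit_time X A w = (LEAST t. 1 \<le> t \<and> X t w \<in> A)"

definition irreducible_mc :: "('s \<Rightarrow> 'w measure) \<Rightarrow> (nat \<Rightarrow> 'w \<Rightarrow> 's) \<Rightarrow> bool" where
  "irreducible_mc M X \<longleftrightarrow>
     (\<forall>i j. 0 < measure (M i) {w \<in> space (M i). \<exists>t. X t w = j})"

definition positive_recurrent_mc :: "('s \<Rightarrow> 'w measure) \<Rightarrow> (nat \<Rightarrow> 'w \<Rightarrow> 's) \<Rightarrow> bool" where
  "positive_recurrent_mc M X \<longleftrightarrow>
     (\<forall>i. (AE w in M i. \<exists>t\<ge>1. X t w = i) \<and>
          integrable (M i) (\<lambda>w. real (hit_time X {i} w)))"

definition invariant_distribution :: "('s \<Rightarrow> 's \<Rightarrow> real) \<Rightarrow> ('s \<Rightarrow> real) \<Rightarrow> bool" where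
  "invariant_distribution P \<pi> \<longleftrightarrow>
     (\<forall>k. 0 \<le> \<pi> k) \<and> \<pi> summable_on UNIV \<and> (\<Sum>\<^sub>\<infinity>k. \<pi> k) = 1 \<and>
     (\<forall>k. (\<lambda>l. \<pi> l * P l k) summable_on UNIV \<and> (\<Sum>\<^sub>\<infinity>l. \<pi> l * P l k) = \<pi> k)"

definition y_val :: "('s \<Rightarrow> 'w measure) \<Rightarrow> (nat \<Rightarrow> 'w \<Rightarrow> 's) \<Rightarrow> ('s \<Rightarrow> real) \<Rightarrow> 's set \<Rightarrow> 's \<Rightarrow> real" where
  "y_val M X g A i = (\<integral>w. (\<Sum>t<hit_time X A w. g (X t w)) \<partial>M i)"

definition tau_val :: "('s \<Rightarrow> 'w measure) \<Rightarrow> (nat \<Rightarrow> 'w \<Rightarrow> 's) \<Rightarrow> 's set \<Rightarrow> 's \<Rightarrow> real" where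
  "tau_val M X A i = (\<integral>w. real (hit_time X A w) \<partial>M i)"

end

theory Submission
  imports Defs
begin

text \<open>All expectations are first computed for nonnegative rewards, with values in \<open>ennreal\<close>.
  For a reward \<open>v\<close>, the expected reward collected before the first positive hitting time \<open>T(B)\<close>
  of a set \<open>B\<close> is the least solution \<open>u\<close> of \<open>u = v + trans_on (-B) u\<close>, where \<open>trans_on S\<close> is the
  transition matrix restricted to target states in \<open>S\<close>; the expected value of \<open>v\<close> at time \<open>T(B)\<close>
  is the reward of \<open>trans_on B v\<close>. Irreducibility and recurrence make every nonempty set hit
  almost surely, and invariance of \<open>\<pi>\<close> gives the cycle formula
  \<open>\<pi> j * E\<^sub>j[\<Sum>t<T({j}). v (X t)] = \<Sum>k. \<pi> k * v k\<close>, so \<open>\<pi> j > 0\<close> and rewards of \<open>\<pi>\<close>-integrable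
  functions are finite.

  Split \<open>g - \<omega>\<close> into positive and negative parts \<open>f\<^sup>+\<close> and \<open>f\<^sup>-\<close>; they have equal \<open>\<pi>\<close>-mean, so by
  the cycle formula their rewards before returning to \<open>j\<close> agree at \<open>j\<close>. Let \<open>H\<close> and \<open>V\<close> be the
  rewards before \<open>T({j})\<close> and \<open>T(A)\<close>, and \<open>U\<close> the expected value of \<open>H\<close> at time \<open>T(A)\<close>.
  First-step equations show that \<open>H f\<^sup>+ + V f\<^sup>- + U f\<^sup>-\<close> and \<open>H f\<^sup>- + V f\<^sup>+ + U f\<^sup>+\<close> differ by a
  function that is harmonic off \<open>A\<close>. Both are dominated by a finite reward \<open>W\<close> collected before
  \<open>T(A)\<close>, whose iterates under \<open>trans_on (-A)\<close> tend to zero, so they coincide; subtracting gives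
  the claim.\<close>

lemma nn_integral_count_space_eq_infsum:
  fixes f :: "'a::countable \<Rightarrow> real"
  assumes "\<And>k. 0 \<le> f k" "f summable_on UNIV"
  shows "(\<integral>\<^sup>+k. ennreal (f k) \<partial>count_space UNIV) = ennreal (\<Sum>\<^sub>\<infinity>k. f k)"
proof -
  have abs: "Infinite_Set_Sum.abs_summable_on f UNIV"
    using assms abs_summable_equivalent by fastforce
  have "(\<integral>\<^sup>+k. ennreal (f k) \<partial>count_space UNIV) = ennreal (infsetsum f UNIV)"
    using nn_integral_conv_infsetsum[OF abs] assms by simp
  then show ?thesis
    by (simp add: infsetsum_infsum[OF abs])
qed

lemma SUP_sum_lessThan_min: "(SUP n. (\<Sum>t<min n T. f t)) = (\<Sum>t<T. f t :: ennreal)"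
  for T :: nat
proof (rule antisym)
  show "(SUP n. (\<Sum>t<min n T. f t)) \<le> (\<Sum>t<T. f t)"
    by (intro SUP_least sum_mono2) (auto simp: min_def)
  show "(\<Sum>t<T. f t) \<le> (SUP n. (\<Sum>t<min n T. f t))"
    by (rule SUP_upper2[where i=T]) auto
qed

lemma ennreal_eq_of_le_of_add_eq:
  fixes a b c d :: ennreal
  assumes "a \<le> b" "c \<le> d" "a + c = b + d" "b + d \<noteq> \<infinity>"
  shows "a = b"
proof -
  have "a + d \<le> b + d" "b + d \<le> a + d"
    using assms add_left_mono[OF assms(2), of a] by (auto intro: add_right_mono)
  then have "d + a = d + b" by (simp add: add.commute antisym)
  with assms(4) show ?thesis by (simp add: ennreal_add_left_cancel)
qed

locale markov_chain_laws =
  fixes P :: "'s::countable \<Rightarrow> 's \<Rightarrow> real" and M :: "'s \<Rightarrow> 'w measure" and X :: "nat \<Rightarrow> 'w \<Rightarrow> 's"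
  assumes markov: "markov_chain P M X"
begin

lemma prob_space_M[simp]: "prob_space (M i)"
  using markov unfolding markov_chain_def by blast

lemma emeasure_space_M[simp]: "emeasure (M i) (space (M i)) = 1"
  by (simp add: prob_space.emeasure_space_1)

lemma measurable_X[measurable]: "X t \<in> measurable (M i) (count_space UNIV)"
  using markov unfolding markov_chain_def by blast

lemma measure_cylinder:
  "measure (M i) {w \<in> space (M i). \<forall>k\<le>n. X k w = s k}
     = (if s 0 = i then (\<Prod>k<n. P (s k) (s (Suc k))) else 0)"
  using markov unfolding markov_chain_def by blast

lemma P_nonneg[simp]: "0 \<le> P i k"
  using markov unfolding markov_chain_def stochastic_matrix_def by blast

lemma nn_integral_P: "(\<integral>\<^sup>+l. ennreal (P i l) \<partial>count_space UNIV) = 1"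
  using markov unfolding markov_chain_def stochastic_matrix_def
  by (subst nn_integral_count_space_eq_infsum) auto

lemma P_le_1: "ennreal (P i l) \<le> 1"
  using nn_integral_ge_point[of l UNIV "\<lambda>l. ennreal (P i l)"] nn_integral_P by simp

lemma AE_X_0: "AE w in M i. X 0 w = i"
proof -
  interpret prob_space "M i" by simp
  have "prob {w \<in> space (M i). \<forall>k\<le>0. X k w = i} = 1"
    by (subst measure_cylinder) simp
  then show ?thesis by (auto dest!: AE_prob_1)
qed

subsection \<open>Finite path prefixes\<close>

definition path_prefix :: "nat \<Rightarrow> 'w \<Rightarrow> 's list" where
  "path_prefix n w = map (\<lambda>t. X t w) [0..<Suc n]"

lemma path_prefix_nth[simp]: "t \<le> n \<Longrightarrow> path_prefix n w ! t = X t w"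
  unfolding path_prefix_def by (simp add: nth_map_upt less_Suc_eq_le del: upt_Suc)

lemma length_path_prefix[simp]: "length (path_prefix n w) = Suc n"
  unfolding path_prefix_def by (simp del: upt_Suc)

lemma path_prefix_eq_iff:
  "path_prefix n w = xs \<longleftrightarrow> length xs = Suc n \<and> (\<forall>k\<le>n. X k w = xs ! k)"
  by (auto simp: list_eq_iff_nth_eq less_Suc_eq_le)

lemma sets_path_prefix_eq[measurable]: "{w \<in> space (M i). path_prefix n w = xs} \<in> sets (M i)"
proof -
  have "{w \<in> space (M i). path_prefix n w = xs} =
      (if length xs = Suc n then (\<Inter>k\<in>{..n}. {w \<in> space (M i). X k w = xs ! k}) \<inter> space (M i) else {})"
    by (auto simp: path_prefix_eq_iff)
  then show ?thesis
    by auto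
qed

lemma measurable_path_prefix[measurable]: "path_prefix n \<in> measurable (M i) (count_space UNIV)"
  using sets_path_prefix_eq[of i n]
  by (subst measurable_count_space_eq_countable) (auto simp: vimage_def Int_def conj_commute)

definition path_weight :: "'s \<Rightarrow> nat \<Rightarrow> 's list \<Rightarrow> ennreal" where
  "path_weight i n xs = ennreal (if length xs = Suc n \<and> xs ! 0 = i
                                 then (\<Prod>k<n. P (xs ! k) (xs ! Suc k)) else 0)"

lemma emeasure_path_prefix_eq:
  "emeasure (M i) {w \<in> space (M i). path_prefix n w = xs} = path_weight i n xs"
proof (cases "length xs = Suc n")
  case True
  interpret prob_space "M i" by simp
  have "{w \<in> space (M i). path_prefix n w = xs} = {w \<in> space (M i). \<forall>k\<le>n. X k w = xs ! k}"
    using True by (simp add: path_prefix_eq_iff)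
  then show ?thesis
    using True by (simp add: emeasure_eq_measure measure_cylinder path_weight_def)
qed (simp add: path_prefix_eq_iff path_weight_def)

lemma nn_integral_path_prefix:
  "(\<integral>\<^sup>+w. F (path_prefix n w) \<partial>M i) = (\<integral>\<^sup>+xs. F xs * path_weight i n xs \<partial>count_space UNIV)"
proof -
  let ?E = "\<lambda>xs. {w \<in> space (M i). path_prefix n w = xs}"
  have "(\<integral>\<^sup>+w. F (path_prefix n w) \<partial>M i) =
      (\<integral>\<^sup>+w. (\<integral>\<^sup>+xs. F xs * indicator (?E xs) w \<partial>count_space UNIV) \<partial>M i)"
  proof (rule nn_integral_cong)
    fix w assume "w \<in> space (M i)"
    then have "(\<integral>\<^sup>+xs. F xs * indicator (?E xs) w \<partial>count_space UNIV)
        = (\<integral>\<^sup>+xs. F xs * indicator {path_prefix n w} xs \<partial>count_space UNIV)"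
      by (intro nn_integral_cong) (auto split: split_indicator)
    then show "F (path_prefix n w) = (\<integral>\<^sup>+xs. F xs * indicator (?E xs) w \<partial>count_space UNIV)"
      by simp
  qed
  also have "\<dots> = (\<integral>\<^sup>+xs. (\<integral>\<^sup>+w. F xs * indicator (?E xs) w \<partial>M i) \<partial>count_space UNIV)"
    by (rule nn_integral_count_space_nn_integral) auto
  also have "\<dots> = (\<integral>\<^sup>+xs. F xs * path_weight i n xs \<partial>count_space UNIV)"
    by (simp add: nn_integral_cmult_indicator emeasure_path_prefix_eq)
  finally show ?thesis .
qed

lemma path_weight_Cons:
  "path_weight i (Suc n) (k # xs) =
     (if k = i then ennreal (P i (xs ! 0)) * path_weight (xs ! 0) n xs else 0)"
proof (cases "length xs = Suc n \<and> k = i")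
  case True
  then show ?thesis
    unfolding path_weight_def
    by (simp add: prod.lessThan_Suc_shift ennreal_mult prod_nonneg del: prod.lessThan_Suc)
qed (auto simp: path_weight_def)

text \<open>First-step decomposition: this is where the Markov property enters.\<close>

lemma nn_integral_path_prefix_Suc:
  "(\<integral>\<^sup>+w. F (path_prefix (Suc n) w) \<partial>M i) =
   (\<integral>\<^sup>+l. ennreal (P i l) * (\<integral>\<^sup>+w. F (i # path_prefix n w) \<partial>M l) \<partial>count_space UNIV)"
proof -
  have "(\<integral>\<^sup>+l. ennreal (P i l) * (\<integral>\<^sup>+w. F (i # path_prefix n w) \<partial>M l) \<partial>count_space UNIV)
     = (\<integral>\<^sup>+l. (\<integral>\<^sup>+xs. ennreal (P i l) * (F (i # xs) * path_weight l n xs) \<partial>count_space UNIV) \<partial>count_space UNIV)"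
    by (simp add: nn_integral_path_prefix[where F="\<lambda>xs. F (i # xs)"] nn_integral_cmult)
  also have "\<dots> = (\<integral>\<^sup>+xs. (\<integral>\<^sup>+l. ennreal (P i l) * (F (i # xs) * path_weight l n xs) \<partial>count_space UNIV) \<partial>count_space UNIV)"
    by (rule nn_integral_count_space_nn_integral[symmetric]) auto
  also have "\<dots> = (\<integral>\<^sup>+xs. (\<integral>\<^sup>+l. (ennreal (P i l) * (F (i # xs) * path_weight l n xs)) * indicator {xs ! 0} l \<partial>count_space UNIV) \<partial>count_space UNIV)"
    by (intro nn_integral_cong) (auto split: split_indicator simp: path_weight_def)
  also have "\<dots> = (\<integral>\<^sup>+xs. ennreal (P i (xs ! 0)) * (F (i # xs) * path_weight (xs ! 0) n xs) \<partial>count_space UNIV)"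
    by (intro nn_integral_cong) (subst nn_integral_indicator_singleton, auto)
  also have "\<dots> = (\<integral>\<^sup>+xs. F (i # xs) * path_weight i (Suc n) (i # xs) \<partial>count_space UNIV)"
    by (intro nn_integral_cong) (simp add: path_weight_Cons mult_ac)
  also have "\<dots> = (\<integral>\<^sup>+ys. F ys * path_weight i (Suc n) ys \<partial>count_space (range (Cons i)))"
    by (rule nn_integral_bij_count_space[of "Cons i" UNIV]) (simp add: bij_betw_def)
  also have "\<dots> = (\<integral>\<^sup>+ys. F ys * path_weight i (Suc n) ys \<partial>count_space UNIV)"
  proof (rule nn_integral_count_space_eq)
    fix ys assume "ys \<in> UNIV - range (Cons i)"
    then show "F ys * path_weight i (Suc n) ys = 0"
      by (cases ys) (auto simp: path_weight_def)
  qed auto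
  also have "\<dots> = (\<integral>\<^sup>+w. F (path_prefix (Suc n) w) \<partial>M i)"
    by (rule nn_integral_path_prefix[symmetric])
  finally show ?thesis ..
qed

subsection \<open>The one-step operator restricted to a set of target states\<close>

definition trans_on :: "'s set \<Rightarrow> ('s \<Rightarrow> ennreal) \<Rightarrow> 's \<Rightarrow> ennreal" where
  "trans_on S u i = (\<integral>\<^sup>+l. ennreal (P i l) * (indicator S l * u l) \<partial>count_space UNIV)"

lemma trans_on_add: "trans_on S (\<lambda>l. u l + v l) i = trans_on S u i + trans_on S v i"
  unfolding trans_on_def by (simp add: distrib_left nn_integral_add)

lemma trans_on_cmult: "trans_on S (\<lambda>l. c * u l) i = c * trans_on S u i"
  unfolding trans_on_def
  by (subst nn_integral_cmult[symmetric]) (auto intro!: nn_integral_cong simp: mult_ac)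

lemma trans_on_mono: "(\<And>l. u l \<le> v l) \<Longrightarrow> trans_on S u i \<le> trans_on S v i"
  unfolding trans_on_def by (intro nn_integral_mono mult_left_mono) (auto simp: indicator_def)

lemma trans_on_mono_set: "S \<subseteq> S' \<Longrightarrow> trans_on S u i \<le> trans_on S' u i"
  unfolding trans_on_def by (intro nn_integral_mono mult_left_mono) (auto simp: indicator_def)

lemma trans_on_UNIV_split: "trans_on UNIV u i = trans_on S u i + trans_on (-S) u i"
  unfolding trans_on_def
  by (subst nn_integral_add[symmetric]) (auto intro!: nn_integral_cong simp: indicator_def)

lemma trans_on_UNIV_const[simp]: "trans_on UNIV (\<lambda>_. c) i = c"
  unfolding trans_on_def by (simp add: nn_integral_multc nn_integral_P)

lemma trans_on_singleton: "trans_on {j} u i = ennreal (P i j) * u j"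
proof -
  have "trans_on {j} u i = (\<integral>\<^sup>+l. (ennreal (P i l) * u l) * indicator {j} l \<partial>count_space UNIV)"
    unfolding trans_on_def by (intro nn_integral_cong) (simp add: indicator_def)
  then show ?thesis by simp
qed

lemma trans_on_le_1: "(\<And>l. u l \<le> 1) \<Longrightarrow> trans_on S u i \<le> 1"
  using trans_on_mono_set[of S UNIV u i] trans_on_mono[of u "\<lambda>_. 1" UNIV i] by simp

lemma trans_on_ge_point: "l \<in> S \<Longrightarrow> ennreal (P i l) * u l \<le> trans_on S u i"
  unfolding trans_on_def
  using nn_integral_ge_point[of l UNIV "\<lambda>l. ennreal (P i l) * (indicator S l * u l)"] by simp

lemma trans_on_eq_0_point: "trans_on S u i = 0 \<Longrightarrow> l \<in> S \<Longrightarrow> 0 < P i l \<Longrightarrow> u l = 0"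
  unfolding trans_on_def by (auto simp: nn_integral_0_iff_AE AE_count_space indicator_def)

lemma trans_on_SUP:
  assumes "\<And>n l. U n l \<le> U (Suc n) l"
  shows "trans_on S (\<lambda>l. SUP n. U n l) i = (SUP n. trans_on S (U n) i)"
proof -
  have inc: "incseq (\<lambda>n l. ennreal (P i l) * (indicator S l * U n l))"
    using assms by (intro incseq_SucI le_funI mult_left_mono) (auto simp: indicator_def)
  have "trans_on S (\<lambda>l. SUP n. U n l) i
      = (\<integral>\<^sup>+l. (SUP n. ennreal (P i l) * (indicator S l * U n l)) \<partial>count_space UNIV)"
    unfolding trans_on_def by (simp add: SUP_mult_left_ennreal)
  also have "\<dots> = (SUP n. trans_on S (U n) i)"
    unfolding trans_on_def by (rule nn_integral_monotone_convergence_SUP[OF inc]) simp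
  finally show ?thesis .
qed

subsection \<open>Rewards collected before hitting a set\<close>

definition path_reward_before :: "'s set \<Rightarrow> ('s \<Rightarrow> ennreal) \<Rightarrow> nat \<Rightarrow> 's list \<Rightarrow> ennreal" where
  "path_reward_before B v n xs = (\<Sum>t<n. v (xs ! t) * (if \<forall>u\<in>{1..t}. xs ! u \<notin> B then 1 else 0))"

definition path_value_at_hit :: "'s set \<Rightarrow> ('s \<Rightarrow> ennreal) \<Rightarrow> nat \<Rightarrow> 's list \<Rightarrow> ennreal" where
  "path_value_at_hit B v n xs =
     (\<Sum>t<n. if xs ! Suc t \<in> B \<and> (\<forall>u\<in>{1..t}. xs ! u \<notin> B) then v (xs ! Suc t) else 0)"

lemma ball_atLeastAtMost_Suc_Cons:
  "(\<forall>u\<in>{1..Suc t}. Q ((x # ys) ! u)) \<longleftrightarrow> Q (ys ! 0) \<and> (\<forall>u\<in>{1..t}. Q (ys ! u))"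
proof
  assume "\<forall>u\<in>{1..Suc t}. Q ((x # ys) ! u)"
  then have "\<forall>u\<le>t. Q (ys ! u)"
    by (metis Suc_le_mono atLeastAtMost_iff le_add1 nth_Cons_Suc plus_1_eq_Suc)
  then show "Q (ys ! 0) \<and> (\<forall>u\<in>{1..t}. Q (ys ! u))" by auto
next
  assume ys: "Q (ys ! 0) \<and> (\<forall>u\<in>{1..t}. Q (ys ! u))"
  show "\<forall>u\<in>{1..Suc t}. Q ((x # ys) ! u)"
  proof
    fix u assume "u \<in> {1..Suc t}"
    then obtain v where "u = Suc v" "v \<le> t" by (cases u) auto
    with ys show "Q ((x # ys) ! u)"
      by (cases v) auto
  qed
qed

lemma path_reward_before_Cons:
  "path_reward_before B v (Suc n) (x # ys) = v x + (if ys ! 0 \<in> B then 0 else path_reward_before B v n ys)"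
proof -
  have "path_reward_before B v (Suc n) (x # ys) =
      v x + (\<Sum>t<n. v (ys ! t) * (if ys ! 0 \<notin> B \<and> (\<forall>u\<in>{1..t}. ys ! u \<notin> B) then 1 else 0))"
    unfolding path_reward_before_def sum.lessThan_Suc_shift
    by (simp only: ball_atLeastAtMost_Suc_Cons[where Q="\<lambda>z. z \<notin> B"] nth_Cons_Suc nth_Cons_0) simp
  then show ?thesis by (simp add: path_reward_before_def)
qed

lemma path_value_at_hit_Cons:
  "path_value_at_hit B v (Suc n) (x # ys) = (if ys ! 0 \<in> B then v (ys ! 0) else path_value_at_hit B v n ys)"
proof -
  have "path_value_at_hit B v (Suc n) (x # ys) = (if ys ! 0 \<in> B then v (ys ! 0) else 0) +
      (\<Sum>t<n. if ys ! Suc t \<in> B \<and> ys ! 0 \<notin> B \<and> (\<forall>u\<in>{1..t}. ys ! u \<notin> B) then v (ys ! Suc t) else 0)"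
    unfolding path_value_at_hit_def sum.lessThan_Suc_shift
    by (simp only: ball_atLeastAtMost_Suc_Cons[where Q="\<lambda>z. z \<notin> B"] nth_Cons_Suc nth_Cons_0) simp
  then show ?thesis by (simp add: path_value_at_hit_def)
qed

lemma path_reward_before_prefix:
  "n \<le> m \<Longrightarrow> path_reward_before B v n (path_prefix n w) = path_reward_before B v n (path_prefix m w)"
  unfolding path_reward_before_def by (intro sum.cong refl arg_cong2[where f="(*)"]) auto

lemma path_reward_before_prefix_mono:
  "path_reward_before B v n (path_prefix n w) \<le> path_reward_before B v (Suc n) (path_prefix (Suc n) w)"
  by (subst path_reward_before_prefix[of n "Suc n"]) (simp_all add: path_reward_before_def)

text \<open>\<open>reward_before B v i\<close> is \<open>E\<^sub>i[\<Sum>t<T(B). v (X t)]\<close>, where \<open>T(B)\<close> is the first hitting time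
  of \<open>B\<close> at a positive time (\<open>nn_integral_sum_before_hit\<close>); \<open>reward_before_upto\<close> truncates
  the sum at time \<open>n\<close>.\<close>

definition reward_before_upto :: "'s set \<Rightarrow> ('s \<Rightarrow> ennreal) \<Rightarrow> nat \<Rightarrow> 's \<Rightarrow> ennreal" where
  "reward_before_upto B v n i = (\<integral>\<^sup>+w. path_reward_before B v n (path_prefix n w) \<partial>M i)"

definition reward_before :: "'s set \<Rightarrow> ('s \<Rightarrow> ennreal) \<Rightarrow> 's \<Rightarrow> ennreal" where
  "reward_before B v i = (SUP n. reward_before_upto B v n i)"

lemma reward_before_upto_0[simp]: "reward_before_upto B v 0 i = 0"
  by (simp add: reward_before_upto_def path_reward_before_def)

lemma reward_before_upto_Suc:
  "reward_before_upto B v (Suc n) i = v i + trans_on (-B) (reward_before_upto B v n) i"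
proof -
  have "reward_before_upto B v (Suc n) i = (\<integral>\<^sup>+l. ennreal (P i l) *
      (\<integral>\<^sup>+w. path_reward_before B v (Suc n) (i # path_prefix n w) \<partial>M l) \<partial>count_space UNIV)"
    unfolding reward_before_upto_def by (rule nn_integral_path_prefix_Suc)
  also have "\<dots> = trans_on UNIV (\<lambda>l. v i + indicator (-B) l * reward_before_upto B v n l) i"
    unfolding trans_on_def
  proof (intro nn_integral_cong arg_cong2[where f="(*)"])
    fix l
    have "(\<integral>\<^sup>+w. path_reward_before B v (Suc n) (i # path_prefix n w) \<partial>M l) =
        (\<integral>\<^sup>+w. v i + indicator (-B) l * path_reward_before B v n (path_prefix n w) \<partial>M l)"
      by (rule nn_integral_cong_AE, use AE_X_0[of l] in eventually_elim)
         (auto simp: path_reward_before_Cons split: split_indicator)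
    then show "(\<integral>\<^sup>+w. path_reward_before B v (Suc n) (i # path_prefix n w) \<partial>M l) =
        indicator UNIV l * (v i + indicator (-B) l * reward_before_upto B v n l)"
      by (simp add: nn_integral_add nn_integral_cmult reward_before_upto_def)
  qed simp
  also have "\<dots> = v i + trans_on (-B) (reward_before_upto B v n) i"
    by (simp add: trans_on_add) (simp add: trans_on_def)
  finally show ?thesis .
qed

lemma nn_integral_path_value_at_hit:
  "(\<integral>\<^sup>+w. path_value_at_hit B v n (path_prefix n w) \<partial>M i) = reward_before_upto B (trans_on B v) n i"
proof (induction n arbitrary: i)
  case 0
  then show ?case by (simp add: path_value_at_hit_def)
next
  case (Suc n)
  have "(\<integral>\<^sup>+w. path_value_at_hit B v (Suc n) (path_prefix (Suc n) w) \<partial>M i) = (\<integral>\<^sup>+l. ennreal (P i l) *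
      (\<integral>\<^sup>+w. path_value_at_hit B v (Suc n) (i # path_prefix n w) \<partial>M l) \<partial>count_space UNIV)"
    by (rule nn_integral_path_prefix_Suc)
  also have "\<dots> = (\<integral>\<^sup>+l. ennreal (P i l) * (indicator B l * v l) + ennreal (P i l) *
      (indicator (-B) l * reward_before_upto B (trans_on B v) n l) \<partial>count_space UNIV)"
  proof (intro nn_integral_cong)
    fix l
    have "(\<integral>\<^sup>+w. path_value_at_hit B v (Suc n) (i # path_prefix n w) \<partial>M l) =
        (\<integral>\<^sup>+w. indicator B l * v l + indicator (-B) l * path_value_at_hit B v n (path_prefix n w) \<partial>M l)"
      by (rule nn_integral_cong_AE, use AE_X_0[of l] in eventually_elim)
         (auto simp: path_value_at_hit_Cons split: split_indicator)
    then show "ennreal (P i l) * (\<integral>\<^sup>+w. path_value_at_hit B v (Suc n) (i # path_prefix n w) \<partial>M l) =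
        ennreal (P i l) * (indicator B l * v l) +
        ennreal (P i l) * (indicator (-B) l * reward_before_upto B (trans_on B v) n l)"
      by (simp add: nn_integral_add nn_integral_cmult Suc distrib_left)
  qed
  also have "\<dots> = reward_before_upto B (trans_on B v) (Suc n) i"
    by (simp add: nn_integral_add reward_before_upto_Suc trans_on_def)
  finally show ?case .
qed

lemma reward_before_upto_mono: "reward_before_upto B v n i \<le> reward_before_upto B v (Suc n) i"
  unfolding reward_before_upto_def by (intro nn_integral_mono path_reward_before_prefix_mono)

lemma incseq_reward_before_upto: "incseq (\<lambda>n. reward_before_upto B v n i)"
  by (rule incseq_SucI) (rule reward_before_upto_mono)

lemma reward_before_upto_le: "reward_before_upto B v n i \<le> reward_before B v i"
  unfolding reward_before_def by (rule SUP_upper) simp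

lemma reward_before_fixpoint: "reward_before B v i = v i + trans_on (-B) (reward_before B v) i"
proof -
  have "reward_before B v i = (SUP n. reward_before_upto B v (Suc n) i)"
    unfolding reward_before_def
    by (rule antisym) (auto intro!: SUP_mono incseq_reward_before_upto[THEN incseq_SucD])
  also have "\<dots> = v i + (SUP n. trans_on (-B) (reward_before_upto B v n) i)"
    by (simp add: reward_before_upto_Suc ennreal_SUP_add_right)
  also have "\<dots> = v i + trans_on (-B) (reward_before B v) i"
    unfolding reward_before_def by (subst trans_on_SUP) (auto intro: reward_before_upto_mono)
  finally show ?thesis .
qed

lemma trans_on_compl_le_reward_before: "trans_on (-B) (reward_before B v) i \<le> reward_before B v i"
proof -
  have "trans_on (-B) (reward_before B v) i \<le> v i + trans_on (-B) (reward_before B v) i"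
    by simp
  then show ?thesis
    by (simp flip: reward_before_fixpoint)
qed

lemma reward_before_least:
  assumes "\<And>i. v i + trans_on (-B) G i \<le> G i"
  shows "reward_before B v i \<le> G i"
proof -
  have "reward_before_upto B v n i \<le> G i" for n
  proof (induction n arbitrary: i)
    case (Suc n)
    have "reward_before_upto B v (Suc n) i \<le> v i + trans_on (-B) G i"
      unfolding reward_before_upto_Suc using Suc by (intro add_left_mono trans_on_mono) auto
    also have "\<dots> \<le> G i" by (rule assms)
    finally show ?case .
  qed simp
  then show ?thesis unfolding reward_before_def by (auto intro: SUP_least)
qed

lemma reward_before_add: "reward_before B (\<lambda>k. v k + w k) i = reward_before B v i + reward_before B w i"
proof -
  have "reward_before_upto B (\<lambda>k. v k + w k) n i = reward_before_upto B v n i + reward_before_upto B w n i" for n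
    unfolding reward_before_upto_def path_reward_before_def
    by (simp add: sum.distrib distrib_right nn_integral_add)
  then show ?thesis
    unfolding reward_before_def by (simp add: ennreal_SUP_add incseq_reward_before_upto)
qed

lemma reward_before_cmult: "reward_before B (\<lambda>k. c * v k) i = c * reward_before B v i"
proof -
  have "path_reward_before B (\<lambda>k. c * v k) n xs = c * path_reward_before B v n xs" for n xs
    unfolding path_reward_before_def by (simp add: sum_distrib_left mult_ac)
  then have "reward_before_upto B (\<lambda>k. c * v k) n i = c * reward_before_upto B v n i" for n
    unfolding reward_before_upto_def by (simp add: nn_integral_cmult)
  then show ?thesis
    unfolding reward_before_def by (simp add: SUP_mult_left_ennreal)
qed

lemma reward_before_mono: "(\<And>k. v k \<le> w k) \<Longrightarrow> reward_before B v i \<le> reward_before B w i"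
  unfolding reward_before_def reward_before_upto_def path_reward_before_def
  by (intro SUP_mono') (auto intro!: nn_integral_mono sum_mono mult_right_mono)

lemma reward_before_antimono_set:
  assumes "B' \<subseteq> B" shows "reward_before B v i \<le> reward_before B' v i"
proof (rule reward_before_least)
  fix i
  have "v i + trans_on (-B) (reward_before B' v) i \<le> v i + trans_on (-B') (reward_before B' v) i"
    using assms by (intro add_left_mono trans_on_mono_set) auto
  then show "v i + trans_on (-B) (reward_before B' v) i \<le> reward_before B' v i"
    by (simp flip: reward_before_fixpoint)
qed

lemma reward_before_trans_on_compl:
  "reward_before B (trans_on (-B) v) i = trans_on (-B) (reward_before B v) i"
proof -
  have "reward_before_upto B (trans_on (-B) v) n i = trans_on (-B) (reward_before_upto B v n) i" for n
  proof (induction n arbitrary: i)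
    case (Suc n)
    then show ?case by (simp add: reward_before_upto_Suc trans_on_add[symmetric])
  qed (simp add: trans_on_def)
  then show ?thesis
    unfolding reward_before_def by (subst trans_on_SUP) (auto intro: reward_before_upto_mono)
qed

text \<open>Restarting at \<open>B\<close> instead of stopping there adds exactly the value collected at the
  hitting time.\<close>

lemma reward_before_trans_on_UNIV:
  "reward_before B (trans_on UNIV v) i + v i = reward_before B v i + reward_before B (trans_on B v) i"
proof -
  have "trans_on UNIV v = (\<lambda>i. trans_on B v i + trans_on (-B) v i)"
    by (rule ext, rule trans_on_UNIV_split)
  then have "reward_before B (trans_on UNIV v) i = reward_before B (trans_on B v) i + trans_on (-B) (reward_before B v) i"
    by (simp add: reward_before_add reward_before_trans_on_compl)
  then show ?thesis
    using reward_before_fixpoint[of B v i] by (simp add: ac_simps)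
qed

lemma reward_before_eq_nn_integral_point_masses:
  "reward_before B v i = (\<integral>\<^sup>+k. v k * reward_before B (indicator {k}) i \<partial>count_space UNIV)"
proof -
  have "path_reward_before B v n xs =
      (\<integral>\<^sup>+k. v k * path_reward_before B (indicator {k}) n xs \<partial>count_space UNIV)" for n xs
  proof -
    have "(\<integral>\<^sup>+k. v k * path_reward_before B (indicator {k}) n xs \<partial>count_space UNIV)
      = (\<integral>\<^sup>+k. (\<Sum>t<n. (v k * (if \<forall>u\<in>{1..t}. xs ! u \<notin> B then 1 else 0)) * indicator {xs ! t} k) \<partial>count_space UNIV)"
      unfolding path_reward_before_def
      by (intro nn_integral_cong) (auto simp: sum_distrib_left indicator_def intro!: sum.cong)
    then show ?thesis
      unfolding path_reward_before_def by (subst (asm) nn_integral_sum) auto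
  qed
  then have upto: "reward_before_upto B v n i =
      (\<integral>\<^sup>+k. v k * reward_before_upto B (indicator {k}) n i \<partial>count_space UNIV)" for n
    unfolding reward_before_upto_def
    by (simp add: nn_integral_cmult[symmetric] nn_integral_count_space_nn_integral[symmetric])
  have inc: "incseq (\<lambda>n k. v k * reward_before_upto B (indicator {k}) n i)"
    by (intro incseq_SucI le_funI mult_left_mono reward_before_upto_mono) auto
  show ?thesis
    unfolding reward_before_def upto
    by (simp add: nn_integral_monotone_convergence_SUP[OF inc, symmetric] SUP_mult_left_ennreal)
qed

definition expect_at :: "nat \<Rightarrow> ('s \<Rightarrow> ennreal) \<Rightarrow> 's \<Rightarrow> ennreal" where
  "expect_at n v i = (\<integral>\<^sup>+w. v (X n w) \<partial>M i)"

lemma expect_at_0: "expect_at 0 v = v"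
proof
  fix i
  have "AE w in M i. v (X 0 w) = v i"
    using AE_X_0[of i] by eventually_elim simp
  then show "expect_at 0 v i = v i"
    unfolding expect_at_def by (subst nn_integral_cong_AE) auto
qed

lemma expect_at_Suc: "expect_at (Suc n) v = trans_on UNIV (expect_at n v)"
proof
  fix i
  have "expect_at (Suc n) v i = (\<integral>\<^sup>+w. (\<lambda>xs. v (xs ! Suc n)) (path_prefix (Suc n) w) \<partial>M i)"
    unfolding expect_at_def by simp
  also have "\<dots> = (\<integral>\<^sup>+l. ennreal (P i l) *
      (\<integral>\<^sup>+w. v ((i # path_prefix n w) ! Suc n) \<partial>M l) \<partial>count_space UNIV)"
    by (rule nn_integral_path_prefix_Suc)
  also have "\<dots> = trans_on UNIV (expect_at n v) i"
    by (simp add: trans_on_def expect_at_def)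
  finally show "expect_at (Suc n) v i = trans_on UNIV (expect_at n v) i" .
qed

lemma expect_at_indicator: "expect_at n (indicator {j}) i = emeasure (M i) {w \<in> space (M i). X n w = j}"
proof -
  have "expect_at n (indicator {j}) i = (\<integral>\<^sup>+w. indicator {w \<in> space (M i). X n w = j} w \<partial>M i)"
    unfolding expect_at_def by (intro nn_integral_cong) (auto simp: indicator_def)
  then show ?thesis by simp
qed

lemma expect_at_indicator_le_1: "expect_at n (indicator {j}) i \<le> 1"
  unfolding expect_at_indicator by (simp add: prob_space.emeasure_le_1)

subsection \<open>Hitting times\<close>

lemma measurable_hit_time[measurable]: "hit_time X B \<in> measurable (M i) (count_space UNIV)"
  unfolding hit_time_def by measurable

lemma hit_time_properties:
  assumes "\<exists>t\<ge>1. X t w \<in> B"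
  shows "1 \<le> hit_time X B w" "X (hit_time X B w) w \<in> B"
    "\<And>u. 1 \<le> u \<Longrightarrow> u < hit_time X B w \<Longrightarrow> X u w \<notin> B"
    "\<And>t. 1 \<le> t \<Longrightarrow> X t w \<in> B \<Longrightarrow> hit_time X B w \<le> t"
proof -
  from assms obtain t where t: "1 \<le> t \<and> X t w \<in> B" by auto
  show "1 \<le> hit_time X B w" "X (hit_time X B w) w \<in> B"
    unfolding hit_time_def using LeastI[of "\<lambda>t. 1 \<le> t \<and> X t w \<in> B", OF t] by auto
  show "\<And>u. 1 \<le> u \<Longrightarrow> u < hit_time X B w \<Longrightarrow> X u w \<notin> B"
    unfolding hit_time_def using not_less_Least by blast
  show "\<And>t. 1 \<le> t \<Longrightarrow> X t w \<in> B \<Longrightarrow> hit_time X B w \<le> t"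
    unfolding hit_time_def by (auto intro: Least_le)
qed

lemma path_value_at_hit_prefix:
  "path_value_at_hit B v n (path_prefix n w) =
     (if \<exists>t\<in>{1..n}. X t w \<in> B then v (X (hit_time X B w) w) else 0)"
proof (cases "\<exists>t\<in>{1..n}. X t w \<in> B")
  case True
  then obtain t0 where t0: "t0 \<in> {1..n}" "X t0 w \<in> B" by auto
  then have "\<exists>t\<ge>1. X t w \<in> B" by auto
  define T where "T = hit_time X B w"
  note hit = hit_time_properties[OF \<open>\<exists>t\<ge>1. X t w \<in> B\<close>, folded T_def]
  have T: "1 \<le> T" "T \<le> n" "X T w \<in> B" "\<And>u. 1 \<le> u \<Longrightarrow> u < T \<Longrightarrow> X u w \<notin> B"
    using hit t0 by (auto intro: le_trans)
  have "path_value_at_hit B v n (path_prefix n w) = (\<Sum>t<n. if t = T - 1 then v (X T w) else 0)"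
    unfolding path_value_at_hit_def
  proof (intro sum.cong refl)
    fix t assume t: "t \<in> {..<n}"
    have "(X (Suc t) w \<in> B \<and> (\<forall>u\<in>{1..t}. X u w \<notin> B)) \<longleftrightarrow> t = T - 1"
    proof
      assume a: "X (Suc t) w \<in> B \<and> (\<forall>u\<in>{1..t}. X u w \<notin> B)"
      have "T \<le> Suc t" using hit(4)[of "Suc t"] a T(1) by auto
      moreover have "\<not> T \<le> t" using a T(1,3) by auto
      ultimately show "t = T - 1" by auto
    next
      assume "t = T - 1"
      then show "X (Suc t) w \<in> B \<and> (\<forall>u\<in>{1..t}. X u w \<notin> B)" using T(1,3,4) by auto
    qed
    then show "(if path_prefix n w ! Suc t \<in> B \<and> (\<forall>u\<in>{1..t}. path_prefix n w ! u \<notin> B)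
        then v (path_prefix n w ! Suc t) else 0) = (if t = T - 1 then v (X T w) else 0)"
      using t T(1) by auto
  qed
  also have "\<dots> = v (X T w)"
    using T(1,2) by (subst sum.delta) auto
  finally show ?thesis using True T_def by simp
next
  case False
  then have "path_value_at_hit B v n (path_prefix n w) = 0"
    unfolding path_value_at_hit_def by (intro sum.neutral ballI) auto
  with False show ?thesis by simp
qed

lemma path_reward_before_prefix_hit:
  assumes "\<exists>t\<ge>1. X t w \<in> B"
  shows "path_reward_before B v n (path_prefix n w) = (\<Sum>t<min n (hit_time X B w). v (X t w))"
proof -
  define T where "T = hit_time X B w"
  note hit = hit_time_properties[OF assms, folded T_def]
  have "path_reward_before B v n (path_prefix n w) = (\<Sum>t<n. if t < T then v (X t w) else 0)"
    unfolding path_reward_before_def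
  proof (intro sum.cong refl)
    fix t assume t: "t \<in> {..<n}"
    have "(\<forall>u\<in>{1..t}. X u w \<notin> B) \<longleftrightarrow> t < T"
      using hit by (auto simp: not_less intro: le_trans)
    then show "v (path_prefix n w ! t) * (if \<forall>u\<in>{1..t}. path_prefix n w ! u \<notin> B then 1 else 0)
        = (if t < T then v (X t w) else 0)"
      using t by auto
  qed
  also have "\<dots> = (\<Sum>t\<in>{..<n} \<inter> {t. t < T}. v (X t w))"
    by (simp add: sum.inter_restrict)
  also have "{..<n} \<inter> {t. t < T} = {..<min n T}" by auto
  finally show ?thesis by (simp add: T_def)
qed

lemma nn_integral_sum_before_hit:
  assumes "AE w in M i. \<exists>t\<ge>1. X t w \<in> B"
  shows "(\<integral>\<^sup>+w. (\<Sum>t<hit_time X B w. v (X t w)) \<partial>M i) = reward_before B v i"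
proof -
  have "(\<integral>\<^sup>+w. (\<Sum>t<hit_time X B w. v (X t w)) \<partial>M i) =
      (\<integral>\<^sup>+w. (SUP n. path_reward_before B v n (path_prefix n w)) \<partial>M i)"
    by (rule nn_integral_cong_AE, use assms in eventually_elim)
       (simp add: path_reward_before_prefix_hit SUP_sum_lessThan_min)
  also have "\<dots> = (SUP n. reward_before_upto B v n i)"
    unfolding reward_before_upto_def
    by (rule nn_integral_monotone_convergence_SUP)
       (auto intro!: incseq_SucI le_funI path_reward_before_prefix_mono)
  finally show ?thesis unfolding reward_before_def .
qed

lemma nn_integral_value_at_hit:
  assumes "AE w in M i. \<exists>t\<ge>1. X t w \<in> B"
  shows "(\<integral>\<^sup>+w. v (X (hit_time X B w) w) \<partial>M i) = reward_before B (trans_on B v) i"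
proof -
  have "AE w in M i. v (X (hit_time X B w) w) = (SUP n. path_value_at_hit B v n (path_prefix n w))"
    using assms
  proof eventually_elim
    case (elim w)
    then obtain t where t: "1 \<le> t" "X t w \<in> B" by auto
    show ?case
    proof (rule antisym)
      show "v (X (hit_time X B w) w) \<le> (SUP n. path_value_at_hit B v n (path_prefix n w))"
        by (rule SUP_upper2[where i=t]) (use t in \<open>auto simp: path_value_at_hit_prefix\<close>)
      show "(SUP n. path_value_at_hit B v n (path_prefix n w)) \<le> v (X (hit_time X B w) w)"
        by (rule SUP_least) (auto simp: path_value_at_hit_prefix)
    qed
  qed
  then have "(\<integral>\<^sup>+w. v (X (hit_time X B w) w) \<partial>M i) =
      (\<integral>\<^sup>+w. (SUP n. path_value_at_hit B v n (path_prefix n w)) \<partial>M i)"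
    by (rule nn_integral_cong_AE)
  also have "\<dots> = (SUP n. \<integral>\<^sup>+w. path_value_at_hit B v n (path_prefix n w) \<partial>M i)"
    by (rule nn_integral_monotone_convergence_SUP)
       (auto intro!: incseq_SucI le_funI simp: path_value_at_hit_prefix)
  finally show ?thesis
    unfolding reward_before_def nn_integral_path_value_at_hit .
qed

lemma reward_before_eq_hit_prob:
  "reward_before B (trans_on B (\<lambda>_. 1)) i = emeasure (M i) {w \<in> space (M i). \<exists>t\<ge>1. X t w \<in> B}"
proof -
  let ?E = "\<lambda>n. {w \<in> space (M i). \<exists>t\<in>{1..n}. X t w \<in> B}"
  have "reward_before_upto B (trans_on B (\<lambda>_. 1)) n i = emeasure (M i) (?E n)" for n
  proof -
    have "reward_before_upto B (trans_on B (\<lambda>_. 1)) n i = (\<integral>\<^sup>+w. indicator (?E n) w \<partial>M i)"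
      unfolding nn_integral_path_value_at_hit[symmetric]
      by (intro nn_integral_cong) (auto simp: path_value_at_hit_prefix indicator_def)
    then show ?thesis by simp
  qed
  then have "reward_before B (trans_on B (\<lambda>_. 1)) i = (SUP n. emeasure (M i) (?E n))"
    unfolding reward_before_def by simp
  also have "\<dots> = emeasure (M i) (\<Union>n. ?E n)"
    by (rule SUP_emeasure_incseq) (auto intro!: incseq_SucI)
  also have "(\<Union>n. ?E n) = {w \<in> space (M i). \<exists>t\<ge>1. X t w \<in> B}"
  proof (intro equalityI subsetI)
    fix w assume "w \<in> {w \<in> space (M i). \<exists>t\<ge>1. X t w \<in> B}"
    then obtain t where "1 \<le> t" "X t w \<in> B" "w \<in> space (M i)" by auto
    then show "w \<in> (\<Union>n. ?E n)"
      by (intro UN_I[of t]) auto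
  qed auto
  finally show ?thesis .
qed

lemma measurable_sum_before_hit[measurable]:
  fixes \<phi> :: "'s \<Rightarrow> real"
  shows "(\<lambda>w. \<Sum>t<hit_time X B w. \<phi> (X t w)) \<in> borel_measurable (M i)"
  by (rule measurable_compose_countable'[where f="\<lambda>n w. \<Sum>t<n. \<phi> (X t w)" and I=UNIV]) auto

lemma measurable_value_at_hit[measurable]:
  fixes \<phi> :: "'s \<Rightarrow> real"
  shows "(\<lambda>w. \<phi> (X (hit_time X B w) w)) \<in> borel_measurable (M i)"
  by (rule measurable_compose_countable'[where f="\<lambda>n w. \<phi> (X n w)" and I=UNIV]) auto

subsection \<open>Restarting at a set\<close>

lemma reward_before_restart_identity:
  "reward_before A v i + reward_before A (trans_on A (reward_before {j} v)) i +
     trans_on (-A) (reward_before {j} v) i =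
   reward_before {j} v i + ennreal (P i j) * reward_before {j} v j +
     trans_on (-A) (\<lambda>k. reward_before A v k + reward_before A (trans_on A (reward_before {j} v)) k) i"
proof -
  let ?H = "reward_before {j} v" and ?V = "reward_before A v"
  let ?U = "reward_before A (trans_on A ?H)"
  have split: "trans_on A ?H i + trans_on (-A) ?H i = ennreal (P i j) * ?H j + trans_on (-{j}) ?H i"
    using trans_on_UNIV_split[of ?H i A] trans_on_UNIV_split[of ?H i "{j}"]
    by (simp add: trans_on_singleton)
  have "?V i + ?U i + trans_on (-A) ?H i =
      v i + (trans_on A ?H i + trans_on (-A) ?H i) + (trans_on (-A) ?V i + trans_on (-A) ?U i)"
    by (subst reward_before_fixpoint[of A v i], subst reward_before_fixpoint[of A "trans_on A ?H" i])
       (simp add: ac_simps)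
  also have "\<dots> = (v i + trans_on (-{j}) ?H i) + ennreal (P i j) * ?H j +
      trans_on (-A) (\<lambda>k. ?V k + ?U k) i"
    unfolding split by (simp add: trans_on_add ac_simps)
  also have "v i + trans_on (-{j}) ?H i = ?H i"
    by (rule reward_before_fixpoint[symmetric])
  finally show ?thesis .
qed

lemma reward_before_le_restart:
  "reward_before {j} v i \<le> reward_before A (\<lambda>k. v k + trans_on A (reward_before {j} v) k) i"
proof -
  let ?W = "reward_before A (\<lambda>k. v k + trans_on A (reward_before {j} v) k)"
  have "reward_before_upto {j} v n i \<le> ?W i" for n
  proof (induction n arbitrary: i)
    case (Suc n)
    have "reward_before_upto {j} v (Suc n) i \<le> v i + trans_on UNIV (reward_before_upto {j} v n) i"
      unfolding reward_before_upto_Suc by (intro add_left_mono trans_on_mono_set) simp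
    also have "\<dots> = v i + trans_on A (reward_before_upto {j} v n) i + trans_on (-A) (reward_before_upto {j} v n) i"
      by (simp add: trans_on_UNIV_split[of _ i A] add.assoc)
    also have "\<dots> \<le> v i + trans_on A (reward_before {j} v) i + trans_on (-A) ?W i"
      by (intro add_mono order_refl trans_on_mono reward_before_upto_le Suc)
    also have "\<dots> = ?W i"
      by (rule reward_before_fixpoint[symmetric])
    finally show ?case .
  qed simp
  then show ?thesis unfolding reward_before_def by (auto intro: SUP_least)
qed

lemma reward_before_value_at_restart_le:
  "reward_before A (trans_on A (reward_before {j} v)) i \<le>
     reward_before {j} v i + reward_before {j} v j * reward_before A (\<lambda>_. 1) i"
proof (rule reward_before_least)
  fix i
  let ?H = "reward_before {j} v" and ?N = "reward_before A (\<lambda>_. 1)"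
  have "trans_on A ?H i + trans_on (-A) (\<lambda>k. ?H k + ?H j * ?N k) i
      = trans_on {j} ?H i + trans_on (-{j}) ?H i + ?H j * trans_on (-A) ?N i"
    using trans_on_UNIV_split[of ?H i A] trans_on_UNIV_split[of ?H i "{j}"]
    by (simp add: trans_on_add trans_on_cmult add.assoc)
  also have "\<dots> \<le> ?H j + ?H i + ?H j * trans_on (-A) ?N i"
    using mult_right_mono[OF P_le_1[of i j], of "?H j"]
    by (intro add_mono trans_on_compl_le_reward_before) (simp_all add: trans_on_singleton)
  also have "\<dots> = ?H i + ?H j * ?N i"
    using reward_before_fixpoint[of A "\<lambda>_. 1" i] by (simp add: distrib_left ac_simps)
  finally show "trans_on A ?H i + trans_on (-A) (\<lambda>k. ?H k + ?H j * ?N k) i \<le> ?H i + ?H j * ?N i" .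
qed

lemma funpow_trans_on_mono: "(\<And>k. u k \<le> v k) \<Longrightarrow> (trans_on S ^^ n) u i \<le> (trans_on S ^^ n) v i"
  by (induction n arbitrary: i) (simp_all add: trans_on_mono)

lemma reward_before_eq_upto_add_funpow:
  "reward_before B v i = reward_before_upto B v n i + (trans_on (-B) ^^ n) (reward_before B v) i"
proof (induction n arbitrary: i)
  case (Suc n)
  have "reward_before_upto B v (Suc n) i + (trans_on (-B) ^^ Suc n) (reward_before B v) i =
      v i + trans_on (-B) (\<lambda>k. reward_before_upto B v n k + (trans_on (-B) ^^ n) (reward_before B v) k) i"
    by (simp add: reward_before_upto_Suc trans_on_add add.assoc)
  then show ?case
    by (simp flip: Suc reward_before_fixpoint)
qed simp

lemma funpow_trans_on_reward_before_tendsto_0: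
  assumes fin: "reward_before B v i \<noteq> \<infinity>"
  shows "(\<lambda>n. (trans_on (-B) ^^ n) (reward_before B v) i) \<longlonglongrightarrow> 0"
proof -
  have "(\<lambda>n. reward_before B v i - reward_before_upto B v n i) \<longlonglongrightarrow> reward_before B v i - reward_before B v i"
    using fin by (intro tendsto_diff_ennreal tendsto_const)
       (auto simp: reward_before_def intro: LIMSEQ_SUP incseq_reward_before_upto)
  moreover have "reward_before B v i - reward_before_upto B v n i = (trans_on (-B) ^^ n) (reward_before B v) i" for n
  proof -
    have "reward_before_upto B v n i \<noteq> \<infinity>"
      using reward_before_upto_le[of B v n i] fin by (auto simp: top_unique)
    then show ?thesis
      by (subst reward_before_eq_upto_add_funpow[of B v i n]) simp
  qed
  ultimately show ?thesis
    using fin by simp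
qed

lemma harmonic_funpow:
  assumes harmonic: "\<And>k. u k + trans_on S v k = v k + trans_on S u k"
    and fin: "\<And>k. trans_on S u k \<noteq> \<infinity>" "\<And>k. trans_on S v k \<noteq> \<infinity>"
  shows "u i + (trans_on S ^^ n) v i = v i + (trans_on S ^^ n) u i"
proof (induction n arbitrary: i)
  case (Suc n)
  let ?Q = "trans_on S"
  have step: "?Q u i + ?Q ((?Q ^^ n) v) i = ?Q v i + ?Q ((?Q ^^ n) u) i"
    using Suc by (simp add: trans_on_add[symmetric])
  have "(?Q u i + ?Q v i) + (u i + (?Q ^^ Suc n) v i) = (u i + ?Q v i) + (?Q u i + ?Q ((?Q ^^ n) v) i)"
    by (simp add: ac_simps)
  also have "\<dots> = (v i + ?Q u i) + (?Q v i + ?Q ((?Q ^^ n) u) i)"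
    by (simp only: harmonic step)
  also have "\<dots> = (?Q u i + ?Q v i) + (v i + (?Q ^^ Suc n) u i)"
    by (simp add: ac_simps)
  finally show ?case
    using fin[of i] by (simp add: ennreal_add_left_cancel)
qed (simp add: add.commute)

text \<open>A maximum principle: two functions whose difference is harmonic off \<open>B\<close> agree if both are
  dominated by a finite reward collected before hitting \<open>B\<close>.\<close>

lemma eq_if_harmonic_dominated:
  assumes fin: "\<And>k. reward_before B s k \<noteq> \<infinity>"
    and dom: "\<And>k. u k \<le> reward_before B s k" "\<And>k. v k \<le> reward_before B s k"
    and harmonic: "\<And>k. u k + trans_on (-B) v k = v k + trans_on (-B) u k"
  shows "u i = v i"
proof -
  have lim: "(\<lambda>n. (trans_on (-B) ^^ n) a i) \<longlonglongrightarrow> 0" if "\<And>k. a k \<le> reward_before B s k" for a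
    by (rule tendsto_sandwich[OF _ _ tendsto_const funpow_trans_on_reward_before_tendsto_0[OF fin]])
       (auto intro!: always_eventually funpow_trans_on_mono that)
  have fin_trans: "trans_on (-B) a k \<noteq> \<infinity>" if "\<And>k. a k \<le> reward_before B s k" for a k
    using trans_on_mono[of a _ "-B" k, OF that] trans_on_compl_le_reward_before[of B s k] fin[of k]
    by (auto simp: top_unique)
  have iterate: "u i + (trans_on (-B) ^^ n) v i = v i + (trans_on (-B) ^^ n) u i" for n
    by (intro harmonic_funpow harmonic fin_trans dom)
  have "(\<lambda>n. u i + (trans_on (-B) ^^ n) v i) \<longlonglongrightarrow> u i + 0"
    by (intro tendsto_add tendsto_const lim dom)
  moreover have "(\<lambda>n. u i + (trans_on (-B) ^^ n) v i) \<longlonglongrightarrow> v i + 0"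
    unfolding iterate by (intro tendsto_add tendsto_const lim dom)
  ultimately show ?thesis
    by (auto dest: LIMSEQ_unique)
qed

end

locale irreducible_recurrent_chain = markov_chain_laws P M X
  for P :: "'s::countable \<Rightarrow> 's \<Rightarrow> real" and M :: "'s \<Rightarrow> 'w measure" and X +
  assumes irreducible: "irreducible_mc M X" and recurrent: "positive_recurrent_mc M X"
begin

lemma expect_at_indicator_pos: "\<exists>n. 0 < expect_at n (indicator {j}) i"
proof (rule ccontr)
  assume "\<not> ?thesis"
  then have "emeasure (M i) (\<Union>n. {w \<in> space (M i). X n w = j}) = 0"
    by (intro emeasure_UN_eq_0) (auto simp: expect_at_indicator)
  moreover have "(\<Union>n. {w \<in> space (M i). X n w = j}) = {w \<in> space (M i). \<exists>t. X t w = j}" by auto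
  moreover have "0 < measure (M i) {w \<in> space (M i). \<exists>t. X t w = j}"
    using irreducible unfolding irreducible_mc_def by blast
  ultimately show False by (simp add: measure_def)
qed

lemma closed_set_contains:
  assumes "a \<in> S" and closed: "\<And>m l. m \<in> S \<Longrightarrow> 0 < P m l \<Longrightarrow> l \<in> S"
  shows "i \<in> S"
proof -
  obtain n where n: "0 < expect_at n (indicator {i}) a" using expect_at_indicator_pos by blast
  have "m \<in> S \<Longrightarrow> 0 < expect_at n (indicator {i}) m \<Longrightarrow> i \<in> S" for m
  proof (induction n arbitrary: m)
    case 0 then show ?case by (cases "m = i") (auto simp: expect_at_0)
  next
    case (Suc n)
    have "trans_on UNIV (expect_at n (indicator {i})) m \<noteq> 0"
      using Suc.prems by (simp add: expect_at_Suc)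
    then obtain l where "ennreal (P m l) * expect_at n (indicator {i}) l \<noteq> 0"
      unfolding trans_on_def by (force simp: nn_integral_0_iff_AE AE_count_space)
    then have "0 < P m l" "0 < expect_at n (indicator {i}) l"
      using P_nonneg[of m l] by (auto simp: ennreal_zero_less_mult_iff less_le)
    with Suc.IH[of l] closed[OF Suc.prems(1)] show ?case by (auto simp: pos2)
  qed
  with n \<open>a \<in> S\<close> show ?thesis by blast
qed

lemma reward_before_hit_le_1: "reward_before B (trans_on B (\<lambda>_. 1)) i \<le> 1"
  unfolding reward_before_eq_hit_prob by (simp add: prob_space.emeasure_le_1)

lemma reward_before_hit_eq_1: "reward_before {a} (trans_on {a} (\<lambda>_. 1)) i = 1"
proof (rule closed_set_contains[where S="{i. reward_before {a} (trans_on {a} (\<lambda>_. 1)) i = 1}", simplified])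
  let ?\<rho> = "reward_before {a} (trans_on {a} (\<lambda>_. 1))"
  show "?\<rho> a = 1"
  proof -
    interpret prob_space "M a" by simp
    have "AE w in M a. \<exists>t\<ge>1. X t w = a"
      using recurrent unfolding positive_recurrent_mc_def by blast
    then show ?thesis
      unfolding reward_before_eq_hit_prob by (intro emeasure_eq_1_AE) auto
  qed
  fix m l assume m: "?\<rho> m = 1" and P: "0 < P m l"
  show "?\<rho> l = 1"
  proof (cases "l = a")
    case True with \<open>?\<rho> a = 1\<close> show ?thesis by simp
  next
    case False
    have fin: "trans_on {a} (\<lambda>_. 1) m \<noteq> \<infinity>" "trans_on (-{a}) ?\<rho> m \<noteq> \<infinity>"
      using trans_on_le_1[of "\<lambda>_. 1" "{a}" m] trans_on_le_1[of ?\<rho> "-{a}" m] reward_before_hit_le_1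
      by (auto simp: top_unique)
    have "trans_on {a} (\<lambda>_. 1) m + trans_on (-{a}) ?\<rho> m = trans_on {a} (\<lambda>_. 1) m + trans_on (-{a}) (\<lambda>_. 1) m"
      using reward_before_fixpoint[of "{a}" _ m] trans_on_UNIV_split[of "\<lambda>_. 1" m "{a}"] m by simp
    then have "trans_on (-{a}) ?\<rho> m + 0 = trans_on (-{a}) (\<lambda>l. ?\<rho> l + (1 - ?\<rho> l)) m"
      using fin(1) by (simp add: ennreal_add_left_cancel add_diff_inverse_ennreal reward_before_hit_le_1)
    then have "trans_on (-{a}) (\<lambda>l. 1 - ?\<rho> l) m = 0"
      using fin(2) by (simp add: trans_on_add ennreal_add_left_cancel)
    then have "1 - ?\<rho> l = 0"
      by (rule trans_on_eq_0_point) (use False P in auto)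
    then have "1 \<le> ?\<rho> l"
      by (simp add: diff_eq_0_iff_ennreal)
    then show ?thesis using reward_before_hit_le_1[of "{a}" l] by (rule antisym[rotated])
  qed
qed

lemma AE_hits: assumes "B \<noteq> {}" shows "AE w in M i. \<exists>t\<ge>1. X t w \<in> B"
proof -
  interpret prob_space "M i" by simp
  obtain a where a: "a \<in> B" using assms by auto
  have "prob {w \<in> space (M i). \<exists>t\<ge>1. X t w \<in> {a}} = 1"
    using reward_before_hit_eq_1[of a i] by (simp add: reward_before_eq_hit_prob emeasure_eq_measure)
  then have "AE w in M i. w \<in> {w \<in> space (M i). \<exists>t\<ge>1. X t w \<in> {a}}"
    by (rule AE_prob_1)
  then show ?thesis by eventually_elim (use a in auto)
qed

lemma integral_sum_before_hit_nonneg: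
  fixes \<psi> :: "'s \<Rightarrow> real"
  assumes "B \<noteq> {}" "\<And>k. 0 \<le> \<psi> k"
  shows "(\<integral>w. (\<Sum>t<hit_time X B w. \<psi> (X t w)) \<partial>M i) = enn2real (reward_before B (\<lambda>k. ennreal (\<psi> k)) i)"
proof -
  have "(\<integral>\<^sup>+w. ennreal (\<Sum>t<hit_time X B w. \<psi> (X t w)) \<partial>M i) = reward_before B (\<lambda>k. ennreal (\<psi> k)) i"
    using nn_integral_sum_before_hit[OF AE_hits[OF assms(1)], of i "\<lambda>k. ennreal (\<psi> k)"] assms(2)
    by simp
  then show ?thesis
    by (subst integral_eq_nn_integral) (auto simp: assms(2) sum_nonneg)
qed

lemma integrable_sum_before_hit:
  fixes \<phi> :: "'s \<Rightarrow> real"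
  assumes "B \<noteq> {}" "reward_before B (\<lambda>k. ennreal \<bar>\<phi> k\<bar>) i \<noteq> \<infinity>"
  shows "integrable (M i) (\<lambda>w. \<Sum>t<hit_time X B w. \<phi> (X t w))"
proof (rule integrableI_bounded)
  have "(\<integral>\<^sup>+w. ennreal (norm (\<Sum>t<hit_time X B w. \<phi> (X t w))) \<partial>M i) \<le>
      (\<integral>\<^sup>+w. ennreal (\<Sum>t<hit_time X B w. \<bar>\<phi> (X t w)\<bar>) \<partial>M i)"
    by (intro nn_integral_mono ennreal_leI) simp
  also have "\<dots> = reward_before B (\<lambda>k. ennreal \<bar>\<phi> k\<bar>) i"
    using nn_integral_sum_before_hit[OF AE_hits[OF assms(1)], of i "\<lambda>k. ennreal \<bar>\<phi> k\<bar>"]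
    by simp
  finally show "(\<integral>\<^sup>+w. ennreal (norm (\<Sum>t<hit_time X B w. \<phi> (X t w))) \<partial>M i) < \<infinity>"
    using assms(2) by (simp add: top.not_eq_extremum le_less_trans)
qed simp

lemma y_val_eq_reward_before:
  assumes "B \<noteq> {}" "reward_before B (\<lambda>k. ennreal \<bar>\<phi> k\<bar>) i \<noteq> \<infinity>"
  shows "y_val M X \<phi> B i =
    enn2real (reward_before B (\<lambda>k. ennreal (\<phi> k)) i) - enn2real (reward_before B (\<lambda>k. ennreal (- \<phi> k)) i)"
proof -
  define p where "p k = max 0 (\<phi> k)" for k
  define n where "n k = max 0 (- \<phi> k)" for k
  have "reward_before B (\<lambda>k. ennreal \<bar>p k\<bar>) i \<le> reward_before B (\<lambda>k. ennreal \<bar>\<phi> k\<bar>) i"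
    "reward_before B (\<lambda>k. ennreal \<bar>n k\<bar>) i \<le> reward_before B (\<lambda>k. ennreal \<bar>\<phi> k\<bar>) i"
    by (auto intro!: reward_before_mono ennreal_leI simp: p_def n_def)
  then have int: "integrable (M i) (\<lambda>w. \<Sum>t<hit_time X B w. p (X t w))"
    "integrable (M i) (\<lambda>w. \<Sum>t<hit_time X B w. n (X t w))"
    using assms by (auto intro!: integrable_sum_before_hit simp: top_unique)
  have split: "(\<lambda>w. \<Sum>t<hit_time X B w. \<phi> (X t w)) =
      (\<lambda>w. (\<Sum>t<hit_time X B w. p (X t w)) - (\<Sum>t<hit_time X B w. n (X t w)))"
    by (auto simp: p_def n_def sum_subtractf[symmetric] max_def intro!: sum.cong)
  have "(\<lambda>k. ennreal (p k)) = (\<lambda>k. ennreal (\<phi> k))" "(\<lambda>k. ennreal (n k)) = (\<lambda>k. ennreal (- \<phi> k))"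
    by (auto simp: p_def n_def)
  moreover have "0 \<le> p k" "0 \<le> n k" for k
    by (simp_all add: p_def n_def)
  ultimately show ?thesis
    unfolding y_val_def using int assms(1) split
    by (simp add: integral_sum_before_hit_nonneg)
qed

lemma y_val_diff_tau_val:
  assumes "B \<noteq> {}" "reward_before B (\<lambda>k. ennreal \<bar>\<phi> k\<bar>) i \<noteq> \<infinity>" "reward_before B (\<lambda>_. 1) i \<noteq> \<infinity>"
  shows "y_val M X \<phi> B i - c * tau_val M X B i = y_val M X (\<lambda>k. \<phi> k - c) B i"
proof -
  have "integrable (M i) (\<lambda>w. \<Sum>t<hit_time X B w. (\<lambda>_. 1::real) (X t w))"
    using assms(1,3) by (intro integrable_sum_before_hit) auto
  then show ?thesis
    unfolding y_val_def tau_val_def using integrable_sum_before_hit[OF assms(1,2)]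
    by (simp add: sum_subtractf)
qed

lemma integral_value_at_hit_diff:
  fixes u v :: "'s \<Rightarrow> ennreal"
  assumes "B \<noteq> {}" "\<And>k. u k \<noteq> \<infinity>" "\<And>k. v k \<noteq> \<infinity>"
    "reward_before B (trans_on B u) i \<noteq> \<infinity>" "reward_before B (trans_on B v) i \<noteq> \<infinity>"
  shows "(\<integral>w. enn2real (u (X (hit_time X B w) w)) - enn2real (v (X (hit_time X B w) w)) \<partial>M i)
    = enn2real (reward_before B (trans_on B u) i) - enn2real (reward_before B (trans_on B v) i)"
proof -
  have nn: "(\<integral>\<^sup>+w. ennreal (enn2real (a (X (hit_time X B w) w))) \<partial>M i) = reward_before B (trans_on B a) i"
    if "\<And>k. a k \<noteq> \<infinity>" for a
    using nn_integral_value_at_hit[OF AE_hits[OF assms(1)], of i a] that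
    by (simp add: ennreal_enn2real_if)
  have int: "integrable (M i) (\<lambda>w. enn2real (a (X (hit_time X B w) w)))"
    and val: "(\<integral>w. enn2real (a (X (hit_time X B w) w)) \<partial>M i) = enn2real (reward_before B (trans_on B a) i)"
    if "\<And>k. a k \<noteq> \<infinity>" "reward_before B (trans_on B a) i \<noteq> \<infinity>" for a
    using nn[of a, OF that(1)] that(2)
    by (auto intro!: integrableI_nonneg simp: integral_eq_nn_integral top.not_eq_extremum)
  show ?thesis
    using int[OF assms(2,4)] int[OF assms(3,5)] val[OF assms(2,4)] val[OF assms(3,5)] by simp
qed

end

locale positive_recurrent_chain = irreducible_recurrent_chain P M X
  for P :: "'s::countable \<Rightarrow> 's \<Rightarrow> real" and M :: "'s \<Rightarrow> 'w measure" and X +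
  fixes \<pi> :: "'s \<Rightarrow> real"
  assumes invariant: "invariant_distribution P \<pi>"
begin

lemma pi_nonneg[simp]: "0 \<le> \<pi> k"
  using invariant unfolding invariant_distribution_def by auto

definition pi_mean :: "('s \<Rightarrow> ennreal) \<Rightarrow> ennreal" where
  "pi_mean v = (\<integral>\<^sup>+k. ennreal (\<pi> k) * v k \<partial>count_space UNIV)"

lemma pi_mean_add: "pi_mean (\<lambda>k. v k + w k) = pi_mean v + pi_mean w"
  unfolding pi_mean_def by (simp add: distrib_left nn_integral_add)

lemma pi_mean_cmult: "pi_mean (\<lambda>k. c * v k) = c * pi_mean v"
  unfolding pi_mean_def
  by (subst nn_integral_cmult[symmetric]) (auto intro!: nn_integral_cong simp: mult_ac)

lemma pi_mean_mono: "(\<And>k. v k \<le> w k) \<Longrightarrow> pi_mean v \<le> pi_mean w"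
  unfolding pi_mean_def by (intro nn_integral_mono mult_left_mono) auto

lemma pi_mean_const[simp]: "pi_mean (\<lambda>_. c) = c"
  using invariant unfolding pi_mean_def invariant_distribution_def
  by (simp add: nn_integral_multc nn_integral_count_space_eq_infsum)

lemma pi_mean_indicator: "pi_mean (indicator {j}) = ennreal (\<pi> j)"
proof -
  have "pi_mean (indicator {j}) = (\<integral>\<^sup>+k. ennreal (\<pi> k) * indicator {j} k \<partial>count_space UNIV)"
    unfolding pi_mean_def ..
  then show ?thesis by simp
qed

lemma pi_mean_split: "pi_mean u = pi_mean (\<lambda>l. indicator (-{j}) l * u l) + ennreal (\<pi> j) * u j"
proof -
  have "pi_mean u = (\<integral>\<^sup>+l. ennreal (\<pi> l) * (indicator (-{j}) l * u l) +
      (ennreal (\<pi> l) * u l) * indicator {j} l \<partial>count_space UNIV)"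
    unfolding pi_mean_def by (intro nn_integral_cong) (auto simp: indicator_def)
  then show ?thesis
    unfolding pi_mean_def by (subst (asm) nn_integral_add) auto
qed

lemma pi_mean_trans_on: "pi_mean (trans_on S u) = pi_mean (\<lambda>l. indicator S l * u l)"
proof -
  have inv: "(\<integral>\<^sup>+k. ennreal (\<pi> k) * ennreal (P k l) \<partial>count_space UNIV) = ennreal (\<pi> l)" for l
    using invariant unfolding invariant_distribution_def
    by (simp add: ennreal_mult'[symmetric] nn_integral_count_space_eq_infsum)
  have "pi_mean (trans_on S u) = (\<integral>\<^sup>+k. (\<integral>\<^sup>+l. ennreal (\<pi> k) * ennreal (P k l) *
      (indicator S l * u l) \<partial>count_space UNIV) \<partial>count_space UNIV)"
    unfolding pi_mean_def trans_on_def by (simp add: nn_integral_cmult[symmetric] mult.assoc)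
  also have "\<dots> = (\<integral>\<^sup>+l. (\<integral>\<^sup>+k. ennreal (\<pi> k) * ennreal (P k l) *
      (indicator S l * u l) \<partial>count_space UNIV) \<partial>count_space UNIV)"
    by (rule nn_integral_count_space_nn_integral) auto
  also have "\<dots> = pi_mean (\<lambda>l. indicator S l * u l)"
    unfolding pi_mean_def by (simp add: nn_integral_multc inv)
  finally show ?thesis .
qed

lemma pi_mean_trans_on_UNIV: "pi_mean (trans_on UNIV u) = pi_mean u"
  by (simp add: pi_mean_trans_on)

lemma pi_mean_expect_at: "pi_mean (expect_at n u) = pi_mean u"
  by (induction n) (simp_all add: expect_at_0 expect_at_Suc pi_mean_trans_on_UNIV)

text \<open>Half of the cycle formula; finiteness of \<open>pi_mean v\<close> is needed to cancel the mass
  collected outside \<open>j\<close>.\<close>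

lemma pi_times_reward_before_le:
  assumes "pi_mean v \<noteq> \<infinity>"
  shows "ennreal (\<pi> j) * reward_before {j} v j \<le> pi_mean v"
proof -
  have upto_Suc: "pi_mean (reward_before_upto {j} v (Suc n)) =
      pi_mean v + pi_mean (\<lambda>l. indicator (-{j}) l * reward_before_upto {j} v n l)" for n
    by (simp add: reward_before_upto_Suc[abs_def] pi_mean_add pi_mean_trans_on)
  have fin: "pi_mean (reward_before_upto {j} v n) \<noteq> \<infinity>" for n
  proof (induction n)
    case (Suc n)
    have "pi_mean (\<lambda>l. indicator (-{j}) l * reward_before_upto {j} v n l) \<le> pi_mean (reward_before_upto {j} v n)"
      by (intro pi_mean_mono) (auto simp: indicator_def)
    with Suc assms show ?case
      unfolding upto_Suc by (auto simp: top_unique)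
  qed (simp add: pi_mean_def)
  have "ennreal (\<pi> j) * reward_before_upto {j} v n j \<le> pi_mean v" for n
  proof -
    define c where "c = pi_mean (\<lambda>l. indicator (-{j}) l * reward_before_upto {j} v n l)"
    have "c + ennreal (\<pi> j) * reward_before_upto {j} v n j = pi_mean (reward_before_upto {j} v n)"
      unfolding c_def by (rule pi_mean_split[symmetric])
    also have "\<dots> \<le> pi_mean (reward_before_upto {j} v (Suc n))"
      by (intro pi_mean_mono reward_before_upto_mono)
    also have "\<dots> = c + pi_mean v"
      unfolding upto_Suc c_def by (simp add: add.commute)
    finally show ?thesis
      using fin[of n] pi_mean_split[of "reward_before_upto {j} v n" j]
      by (simp add: c_def ennreal_add_left_cancel_le)
  qed
  then show ?thesis
    unfolding reward_before_def SUP_mult_left_ennreal by (rule SUP_least)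
qed

text \<open>Recurrence enters here: started at \<open>j\<close>, the chain returns to \<open>j\<close> almost surely.\<close>

lemma reward_before_trans_on_UNIV_at:
  assumes "\<And>k. v k \<noteq> \<infinity>"
  shows "reward_before {j} (trans_on UNIV v) j = reward_before {j} v j"
proof -
  have "trans_on {j} v = (\<lambda>i. v j * trans_on {j} (\<lambda>_. 1) i)"
    by (rule ext) (simp add: trans_on_singleton mult.commute)
  then have "reward_before {j} (trans_on {j} v) j = v j"
    by (simp add: reward_before_cmult reward_before_hit_eq_1)
  then show ?thesis
    using reward_before_trans_on_UNIV[of "{j}" v j] assms[of j]
    by (simp add: add.commute ennreal_add_left_cancel)
qed

lemma reward_before_indicator_self: "reward_before {j} (indicator {j}) i = indicator {j} i"
proof (rule antisym)
  have "(\<lambda>l. ennreal (P i l) * (indicator (-{j}) l * indicator {j} l)) = (\<lambda>_. 0)" for i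
    by (auto simp: indicator_def)
  then have "trans_on (-{j}) (indicator {j}) i = 0" for i
    unfolding trans_on_def by simp
  then show "reward_before {j} (indicator {j}) i \<le> indicator {j} i"
    by (intro reward_before_least) simp
  show "indicator {j} i \<le> reward_before {j} (indicator {j}) i"
    by (subst reward_before_fixpoint) simp
qed

lemma reward_before_expect_at:
  "reward_before {j} (expect_at n (indicator {a})) j = reward_before {j} (indicator {a}) j"
proof (induction n)
  case (Suc n)
  have "expect_at n (indicator {a}) k \<noteq> \<infinity>" for k
    using expect_at_indicator_le_1[of n a k] by (auto simp: top_unique)
  then show ?case by (simp add: expect_at_Suc reward_before_trans_on_UNIV_at Suc)
qed (simp add: expect_at_0)

text \<open>The other half, for point masses. The \<open>n\<close>-step probability \<open>w\<close> of being at \<open>j\<close> satisfies the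
  cycle formula with equality (\<open>reward_before_expect_at\<close>); writing \<open>w\<close> as a positive multiple of the
  point mass at \<open>k\<close> plus a remainder, both parts must then satisfy it with equality.\<close>

lemma pi_times_reward_before_indicator: "ennreal (\<pi> j) * reward_before {j} (indicator {k}) j = ennreal (\<pi> k)"
proof -
  obtain n where "0 < expect_at n (indicator {j}) k" using expect_at_indicator_pos by blast
  define w where "w = expect_at n (indicator {j})"
  define c where "c = w k"
  have c: "c \<noteq> 0" "c \<noteq> \<infinity>"
    using \<open>0 < expect_at n (indicator {j}) k\<close> expect_at_indicator_le_1[of n j k]
    by (auto simp: c_def w_def top_unique)
  define v where "v = (\<lambda>l. c * indicator {k} l)"
  define x where "x = (\<lambda>l. w l - v l)"
  have "v l \<le> w l" for l by (auto simp: v_def c_def indicator_def)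
  then have w_split: "w = (\<lambda>l. v l + x l)" by (simp add: x_def add_diff_inverse_ennreal)
  have pi_w: "pi_mean w = ennreal (\<pi> j)"
    unfolding w_def pi_mean_expect_at by (rule pi_mean_indicator)
  have pi_w_split: "pi_mean w = pi_mean v + pi_mean x"
    unfolding w_split by (rule pi_mean_add)
  have "ennreal (\<pi> j) * reward_before {j} v j + ennreal (\<pi> j) * reward_before {j} x j =
      ennreal (\<pi> j) * reward_before {j} w j"
    unfolding w_split by (simp add: reward_before_add distrib_left)
  also have "\<dots> = ennreal (\<pi> j)"
    unfolding w_def reward_before_expect_at by (simp add: reward_before_indicator_self)
  finally have sum_eq: "ennreal (\<pi> j) * reward_before {j} v j + ennreal (\<pi> j) * reward_before {j} x j =
      pi_mean v + pi_mean x"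
    using pi_w pi_w_split by simp
  have fin: "pi_mean v + pi_mean x \<noteq> \<infinity>"
    using pi_w pi_w_split by simp
  have "ennreal (\<pi> j) * reward_before {j} v j = pi_mean v"
    using fin by (intro ennreal_eq_of_le_of_add_eq[OF _ _ sum_eq] pi_times_reward_before_le) auto
  then have "c * (ennreal (\<pi> j) * reward_before {j} (indicator {k}) j) = c * ennreal (\<pi> k)"
    unfolding v_def by (simp add: reward_before_cmult pi_mean_cmult pi_mean_indicator mult_ac)
  with c show ?thesis by (simp add: ennreal_mult_cancel_left)
qed

lemma cycle_formula: "ennreal (\<pi> j) * reward_before {j} v j = pi_mean v"
proof -
  have "ennreal (\<pi> j) * reward_before {j} v j =
      (\<integral>\<^sup>+k. v k * (ennreal (\<pi> j) * reward_before {j} (indicator {k}) j) \<partial>count_space UNIV)"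
    by (subst reward_before_eq_nn_integral_point_masses) (simp add: nn_integral_cmult[symmetric] mult_ac)
  then show ?thesis
    unfolding pi_mean_def pi_times_reward_before_indicator by (simp add: mult.commute)
qed

lemma pi_pos: "0 < \<pi> j"
proof -
  have "ennreal (\<pi> j) * reward_before {j} (\<lambda>_. 1) j = 1"
    using cycle_formula[of j "\<lambda>_. 1"] by simp
  then have "\<pi> j \<noteq> 0" by auto
  then show ?thesis using pi_nonneg[of j] by linarith
qed

lemma reward_before_singleton_finite:
  assumes "pi_mean v \<noteq> \<infinity>"
  shows "reward_before {a} v i \<noteq> \<infinity>"
proof -
  have a: "reward_before {a} v a \<noteq> \<infinity>"
    using cycle_formula[of a v] assms pi_pos[of a] by (auto simp: ennreal_mult_eq_top_iff)
  have "i \<in> {i. reward_before {a} v i \<noteq> \<infinity>}"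
  proof (rule closed_set_contains)
    fix m l assume "m \<in> {i. reward_before {a} v i \<noteq> \<infinity>}" and P: "0 < P m l"
    then have m: "reward_before {a} v m \<noteq> \<infinity>" by simp
    show "l \<in> {i. reward_before {a} v i \<noteq> \<infinity>}"
    proof (cases "l = a")
      case False
      have "ennreal (P m l) * reward_before {a} v l \<le> trans_on (-{a}) (reward_before {a} v) m"
        using False by (intro trans_on_ge_point) auto
      also have "\<dots> \<le> reward_before {a} v m"
        by (rule trans_on_compl_le_reward_before)
      finally show ?thesis using m P by (auto simp: top_unique ennreal_mult_eq_top_iff)
    qed (use a in simp)
  qed (use a in simp)
  then show ?thesis by simp
qed

lemma reward_before_finite:
  assumes "B \<noteq> {}" "pi_mean v \<noteq> \<infinity>"
  shows "reward_before B v i \<noteq> \<infinity>"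
proof -
  obtain a where "a \<in> B" using assms(1) by auto
  then have "reward_before B v i \<le> reward_before {a} v i"
    by (intro reward_before_antimono_set) auto
  with reward_before_singleton_finite[OF assms(2)] show ?thesis
    by (auto simp: top_unique)
qed

end

locale poisson_setting = positive_recurrent_chain P M X \<pi>
  for P :: "'s::countable \<Rightarrow> 's \<Rightarrow> real" and M :: "'s \<Rightarrow> 'w measure" and X \<pi> +
  fixes g :: "'s \<Rightarrow> real" and \<omega> :: real and j :: 's and A :: "'s set"
  assumes g_summable: "(\<lambda>k. \<pi> k * \<bar>g k\<bar>) summable_on UNIV"
    and \<omega>_eq: "\<omega> = (\<Sum>\<^sub>\<infinity>k. \<pi> k * g k)"
    and A_nonempty: "A \<noteq> {}"
begin

text \<open>Positive and negative parts of the centred reward \<open>g - \<omega>\<close>, and for a nonnegative reward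
  \<open>v\<close>: its expectation \<open>H v\<close> before \<open>T(j)\<close>, \<open>V v\<close> before \<open>T(A)\<close>, and \<open>U v\<close> the expected
  value of \<open>H v\<close> at \<open>X (T(A))\<close>.\<close>

definition f_pos :: "'s \<Rightarrow> ennreal" where "f_pos k = ennreal (g k - \<omega>)"
definition f_neg :: "'s \<Rightarrow> ennreal" where "f_neg k = ennreal (\<omega> - g k)"
abbreviation f_abs :: "'s \<Rightarrow> ennreal" where "f_abs \<equiv> \<lambda>k. f_pos k + f_neg k"

abbreviation H :: "('s \<Rightarrow> ennreal) \<Rightarrow> 's \<Rightarrow> ennreal" where "H v \<equiv> reward_before {j} v"
abbreviation V :: "('s \<Rightarrow> ennreal) \<Rightarrow> 's \<Rightarrow> ennreal" where "V v \<equiv> reward_before A v"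
abbreviation U :: "('s \<Rightarrow> ennreal) \<Rightarrow> 's \<Rightarrow> ennreal" where "U v \<equiv> reward_before A (trans_on A (H v))"

lemma f_pos_add_f_neg: "f_pos k + f_neg k = ennreal \<bar>g k - \<omega>\<bar>"
  by (cases "g k \<le> \<omega>") (simp_all add: f_pos_def f_neg_def ennreal_neg)

lemma pi_mean_abs_g: "pi_mean (\<lambda>k. ennreal \<bar>g k\<bar>) \<noteq> \<infinity>"
  using g_summable unfolding pi_mean_def
  by (simp add: ennreal_mult'[symmetric] nn_integral_count_space_eq_infsum)

lemma pi_mean_abs_f: "pi_mean f_abs \<noteq> \<infinity>"
proof -
  have "pi_mean f_abs \<le> pi_mean (\<lambda>k. ennreal \<bar>g k\<bar> + ennreal \<bar>\<omega>\<bar>)"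
    unfolding f_pos_add_f_neg by (intro pi_mean_mono) (simp flip: ennreal_plus)
  then show ?thesis
    using pi_mean_abs_g by (auto simp: pi_mean_add top_unique)
qed

lemma pi_mean_f_pos_eq_f_neg: "pi_mean f_pos = pi_mean f_neg"
proof -
  have \<pi>: "\<pi> summable_on UNIV" "(\<Sum>\<^sub>\<infinity>k. \<pi> k) = 1"
    using invariant unfolding invariant_distribution_def by auto
  have bound: "(\<lambda>k. \<pi> k * \<bar>g k\<bar> + \<bar>\<omega>\<bar> * \<pi> k) summable_on UNIV"
    using g_summable \<pi>(1) by (intro summable_on_add summable_on_cmult_right)
  define p where "p k = \<pi> k * max 0 (g k - \<omega>)" for k
  define n where "n k = \<pi> k * max 0 (\<omega> - g k)" for k
  have "p k \<le> \<pi> k * \<bar>g k\<bar> + \<bar>\<omega>\<bar> * \<pi> k" "n k \<le> \<pi> k * \<bar>g k\<bar> + \<bar>\<omega>\<bar> * \<pi> k" for k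
  proof -
    have "p k \<le> \<pi> k * (\<bar>g k\<bar> + \<bar>\<omega>\<bar>)" "n k \<le> \<pi> k * (\<bar>g k\<bar> + \<bar>\<omega>\<bar>)"
      unfolding p_def n_def by (intro mult_left_mono; simp)+
    then show "p k \<le> \<pi> k * \<bar>g k\<bar> + \<bar>\<omega>\<bar> * \<pi> k" "n k \<le> \<pi> k * \<bar>g k\<bar> + \<bar>\<omega>\<bar> * \<pi> k"
      by (simp_all add: algebra_simps)
  qed
  then have p: "p summable_on UNIV" and n: "n summable_on UNIV"
    by (auto intro!: summable_on_comparison_test[OF bound] simp: p_def n_def)
  have "(\<Sum>\<^sub>\<infinity>k. p k) + \<omega> = (\<Sum>\<^sub>\<infinity>k. p k + \<omega> * \<pi> k)"
    using p \<pi> by (simp add: infsum_add summable_on_cmult_right infsum_cmult_right')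
  also have "(\<lambda>k. p k + \<omega> * \<pi> k) = (\<lambda>k. n k + \<pi> k * g k)"
    by (auto simp: p_def n_def max_def algebra_simps)
  also have "(\<Sum>\<^sub>\<infinity>k. n k + \<pi> k * g k) = (\<Sum>\<^sub>\<infinity>k. n k) + \<omega>"
    using n g_summable \<omega>_eq
    by (simp add: infsum_add abs_summable_summable abs_mult)
  finally have "(\<Sum>\<^sub>\<infinity>k. p k) = (\<Sum>\<^sub>\<infinity>k. n k)" by simp
  moreover have "ennreal (\<pi> k) * f_pos k = ennreal (p k)" "ennreal (\<pi> k) * f_neg k = ennreal (n k)" for k
    by (simp_all add: p_def n_def f_pos_def f_neg_def ennreal_mult'')
  then have "pi_mean f_pos = ennreal (\<Sum>\<^sub>\<infinity>k. p k)" "pi_mean f_neg = ennreal (\<Sum>\<^sub>\<infinity>k. n k)"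
    using p n unfolding pi_mean_def
    by (simp_all add: nn_integral_count_space_eq_infsum p_def[abs_def] n_def[abs_def])
  ultimately show ?thesis by simp
qed

lemma H_f_pos_eq_f_neg_at: "H f_pos j = H f_neg j"
proof -
  have "ennreal (\<pi> j) * H f_pos j = ennreal (\<pi> j) * H f_neg j"
    using pi_mean_f_pos_eq_f_neg by (simp add: cycle_formula)
  with pi_pos[of j] show ?thesis
    by (simp add: ennreal_mult_cancel_left)
qed

lemma H_f_abs: "H f_abs = (\<lambda>k. H f_pos k + H f_neg k)"
  by (rule ext) (rule reward_before_add)

lemma U_f_abs: "U f_abs i = U f_pos i + U f_neg i"
proof -
  have "trans_on A (H f_abs) = (\<lambda>k. trans_on A (H f_pos) k + trans_on A (H f_neg) k)"
    unfolding H_f_abs by (rule ext) (rule trans_on_add)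
  then show ?thesis
    by (simp add: reward_before_add)
qed

lemma reward_before_f_finite:
  assumes "B \<noteq> {}"
  shows "reward_before B f_pos i \<noteq> \<infinity>" "reward_before B f_neg i \<noteq> \<infinity>"
  using reward_before_finite[OF assms pi_mean_abs_f, of i] by (simp_all add: reward_before_add)

lemma U_finite: "U f_pos i \<noteq> \<infinity>" "U f_neg i \<noteq> \<infinity>"
proof -
  have "U f_abs i \<le> H f_abs i + H f_abs j * V (\<lambda>_. 1) i"
    by (rule reward_before_value_at_restart_le)
  moreover have "H f_abs k \<noteq> \<infinity>" "V (\<lambda>_. 1) k \<noteq> \<infinity>" for k
    using reward_before_finite[OF _ pi_mean_abs_f] reward_before_finite[OF A_nonempty, of "\<lambda>_. 1"]
    by auto
  ultimately have "U f_abs i \<noteq> \<infinity>"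
    by (auto simp: top_unique ennreal_mult_eq_top_iff)
  then show "U f_pos i \<noteq> \<infinity>" "U f_neg i \<noteq> \<infinity>"
    by (simp_all add: U_f_abs)
qed

lemma centred_y_val_eq:
  assumes "B \<noteq> {}"
  shows "y_val M X g B i - \<omega> * tau_val M X B i =
    enn2real (reward_before B f_pos i) - enn2real (reward_before B f_neg i)"
proof -
  have "y_val M X g B i - \<omega> * tau_val M X B i = y_val M X (\<lambda>k. g k - \<omega>) B i"
    using reward_before_finite[OF assms pi_mean_abs_g] reward_before_finite[OF assms, of "\<lambda>_. 1"]
    by (intro y_val_diff_tau_val assms) auto
  also have "\<dots> = enn2real (reward_before B f_pos i) - enn2real (reward_before B f_neg i)"
    using reward_before_finite[OF assms pi_mean_abs_f, of i] unfolding f_pos_add_f_neg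
    by (subst y_val_eq_reward_before) (simp_all add: assms f_pos_def[abs_def] f_neg_def[abs_def])
  finally show ?thesis .
qed

text \<open>The theorem as \<open>H f_pos - H f_neg = (V f_pos - V f_neg) + (U f_pos - U f_neg)\<close>, written
  without subtraction. By the restart identity the two sides differ by a function that is
  harmonic off \<open>A\<close>, and both are dominated by a finite reward collected before \<open>T(A)\<close>.\<close>

lemma balance: "H f_pos i + (V f_neg i + U f_neg i) = H f_neg i + (V f_pos i + U f_pos i)"
proof -
  let ?Q = "trans_on (-A)"
  define D where "D v w k = H v k + (V w k + U w k)" for v w k
  have restart: "V v k + U v k + ?Q (H v) k = H v k + ennreal (P k j) * H v j + ?Q (\<lambda>k. V v k + U v k) k"
    for v k by (rule reward_before_restart_identity)
  have swap: "D v w k + ?Q (D w v) k = H v k + H w k + ennreal (P k j) * H w j +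
      ?Q (\<lambda>k. V v k + U v k) k + ?Q (\<lambda>k. V w k + U w k) k" for v w k
  proof -
    have "D v w k + ?Q (D w v) k =
        H v k + (V w k + U w k + ?Q (H w) k) + ?Q (\<lambda>k. V v k + U v k) k"
      unfolding D_def by (simp add: trans_on_add ac_simps)
    then show ?thesis
      unfolding restart by (simp add: ac_simps)
  qed
  have harmonic: "D f_pos f_neg k + ?Q (D f_neg f_pos) k = D f_neg f_pos k + ?Q (D f_pos f_neg) k" for k
    unfolding swap H_f_pos_eq_f_neg_at by (simp add: ac_simps)
  define s where "s k = 2 * (f_abs k + trans_on A (H f_abs) k)" for k
  have W: "reward_before A s k = 2 * (V f_abs k + U f_abs k)" for k
    unfolding s_def by (simp add: reward_before_cmult reward_before_add)
  have dom: "D v w k \<le> reward_before A s k" if "{v, w} = {f_pos, f_neg}" for v w k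
  proof -
    have "H v k \<le> H f_abs k"
      using that by (auto simp: doubleton_eq_iff reward_before_add)
    also have "\<dots> \<le> V f_abs k + U f_abs k"
      using reward_before_le_restart[of j f_abs k A] by (simp add: reward_before_add)
    finally have "D v w k \<le> (V f_abs k + U f_abs k) + (V w k + U w k)"
      unfolding D_def by (rule add_right_mono)
    also have "V w k + U w k \<le> V f_abs k + U f_abs k"
      using that by (auto simp: doubleton_eq_iff reward_before_add U_f_abs intro!: add_mono)
    finally show ?thesis
      unfolding W mult_2 by (simp add: add_left_mono)
  qed
  have "reward_before A s k \<noteq> \<infinity>" for k
    unfolding W using reward_before_f_finite[OF A_nonempty] U_finite
    by (simp add: reward_before_add U_f_abs ennreal_mult_eq_top_iff)
  then have "D f_pos f_neg i = D f_neg f_pos i"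
    by (rule eq_if_harmonic_dominated[OF _ dom dom harmonic]) auto
  then show ?thesis
    unfolding D_def .
qed

lemma centred_reward_decomposition:
  "y_val M X g {j} i - \<omega> * tau_val M X {j} i = y_val M X g A i - \<omega> * tau_val M X A i +
     (\<integral>w. y_val M X g {j} (X (hit_time X A w) w) - \<omega> * tau_val M X {j} (X (hit_time X A w) w) \<partial>M i)"
proof -
  have j: "{j} \<noteq> {}" by simp
  have H_fin: "H f_pos k \<noteq> \<infinity>" "H f_neg k \<noteq> \<infinity>" for k
    using reward_before_f_finite[of "{j}"] by auto
  have "(\<integral>w. y_val M X g {j} (X (hit_time X A w) w) - \<omega> * tau_val M X {j} (X (hit_time X A w) w) \<partial>M i) =
      enn2real (U f_pos i) - enn2real (U f_neg i)"
    unfolding centred_y_val_eq[OF j]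
    by (rule integral_value_at_hit_diff[OF A_nonempty H_fin U_finite])
  moreover have "enn2real (H f_pos i) + (enn2real (V f_neg i) + enn2real (U f_neg i)) =
      enn2real (H f_neg i) + (enn2real (V f_pos i) + enn2real (U f_pos i))"
    using arg_cong[OF balance[of i], of enn2real] H_fin reward_before_f_finite[OF A_nonempty] U_finite
    by (simp add: enn2real_plus top.not_eq_extremum)
  ultimately show ?thesis
    unfolding centred_y_val_eq[OF j] centred_y_val_eq[OF A_nonempty] by linarith
qed

end

theorem lemma2p4:
  fixes P :: "'s::countable \<Rightarrow> 's \<Rightarrow> real"
    and M :: "'s \<Rightarrow> 'w measure" and X :: "nat \<Rightarrow> 'w \<Rightarrow> 's"
    and \<pi> g :: "'s \<Rightarrow> real" and \<omega> :: real
    and h :: "'s \<Rightarrow> real" and j :: 's and A :: "'s set"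
  assumes mc: "markov_chain P M X"
    and irr: "irreducible_mc M X"
    and pr: "positive_recurrent_mc M X"
    and inv: "invariant_distribution P \<pi>"
    and g_int: "(\<lambda>k. \<pi> k * \<bar>g k\<bar>) summable_on UNIV"
    and \<omega>_def: "\<omega> = (\<Sum>\<^sub>\<infinity>k. \<pi> k * g k)"
    and h_def: "\<And>i. h i = y_val M X g {j} i - \<omega> * tau_val M X {j} i"
    and A_ne: "A \<noteq> {}"
  shows "\<forall>i. h i = y_val M X g A i - \<omega> * tau_val M X A i
                 + (\<integral>w. h (X (hit_time X A w) w) \<partial>M i)"
proof -
  interpret poisson_setting P M X \<pi> g \<omega> j A
    by unfold_locales (use assms in auto)
  show ?thesis
    unfolding h_def using centred_reward_decomposition by blast
qed

end
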